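(* Given $\alpha>0$, there exist $\Lambda_0,C>0$ such that for every $\Lambda\ge\Lambda_0$ and every $h_1,h_2\in C(\overline{I_\Lambda})$, where $I_\Lambda=\big(-(\ln\Lambda)\Lambda^{-1/4},(\ln\Lambda)\Lambda^{-1/4}\big)$, the boundary value problem \[ \begin{cases} -\varphi_1''+\Lambda^{1/2}V_2^2(\Lambda^{1/4}z)\varphi_1+2\Lambda^{1/2}V_1(\Lambda^{1/4}z)V_2(\Lambda^{1/4}z)\varphi_2=h_1,\\ -\varphi_2''+\Lambda^{1/2}V_1^2(\Lambda^{1/4}z)\varphi_2+2\Lambda^{1/2}V_1(\Lambda^{1/4}z)V_2(\Lambda^{1/4}z)\varphi_1=h_2, \end{cases}\quad z\in I_\Lambda, \] \[ \varphi_i\big(\pm(\ln\Lambda)\Lambda^{-1/4}\big)=0,\ i=1,2, \] has a unique solution, and it satisfies \[ \sum_{i=1}^2\Big(\Lambda^{-1/4}\|\varphi_i'\|_{L^\infty(I_\Lambda)}+\|\varphi_i\|_{L^\infty(I_\Lambda)}\Big)\le C\Lambda^{-\frac12+\alpha}\sum_{i=1}^2\|h_i\|_{L^\infty(I_\Lambda)}. \]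
   Context: $(V_1,V_2)$ is the unique solution with positive components of $V_1''=V_2^2V_1$, $V_2''=V_1^2V_2$ on $\mathbb{R}$ such that $V_1(x)/x\to1/\sqrt2$, $V_2(x)\to0$ as $x\to+\infty$, and $V_1(-x)=V_2(x)$. *)

theory Defs
  imports "HOL-Analysis.Analysis"
begin

definition is_V_pair :: "(real \<Rightarrow> real) \<Rightarrow> (real \<Rightarrow> real) \<Rightarrow> bool" where
  "is_V_pair V1 V2 \<longleftrightarrow>
     (\<forall>x. V1 x > 0 \<and> V2 x > 0) \<and>
     (\<forall>x. V1 differentiable at x \<and> deriv V1 differentiable at x \<and>
          V2 differentiable at x \<and> deriv V2 differentiable at x) \<and>
     (\<forall>x. deriv (deriv V1) x = (V2 x)\<^sup>2 * V1 x \<and> deriv (deriv V2) x = (V1 x)\<^sup>2 * V2 x) \<and>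
     ((\<lambda>x. V1 x / x) \<longlongrightarrow> 1 / sqrt 2) at_top \<and>
     (V2 \<longlongrightarrow> 0) at_top \<and>
     (\<forall>x. V1 (-x) = V2 x)"

definition halfwidth :: "real \<Rightarrow> real" where
  "halfwidth Lam = ln Lam * Lam powr (-1/4)"

text \<open>L^infinity norm (= sup norm for the continuous functions considered), valued in ereal.\<close>
definition supn :: "real set \<Rightarrow> (real \<Rightarrow> real) \<Rightarrow> ereal" where
  "supn S f = (SUP z\<in>S. ereal \<bar>f z\<bar>)"

definition bvp_sol :: "(real \<Rightarrow> real) \<Rightarrow> (real \<Rightarrow> real) \<Rightarrow> real \<Rightarrow> (real \<Rightarrow> real) \<Rightarrow> (real \<Rightarrow> real)
    \<Rightarrow> (real \<Rightarrow> real) \<Rightarrow> (real \<Rightarrow> real) \<Rightarrow> bool" where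
  "bvp_sol V1 V2 Lam h1 h2 p1 p2 \<longleftrightarrow>
     (let L = halfwidth Lam; s = Lam powr (1/4) in
       continuous_on {-L..L} p1 \<and> continuous_on {-L..L} p2 \<and>
       (\<forall>z\<in>{-L<..<L}. p1 differentiable at z \<and> deriv p1 differentiable at z \<and>
                       p2 differentiable at z \<and> deriv p2 differentiable at z) \<and>
       (\<forall>z\<in>{-L<..<L}.
          - deriv (deriv p1) z + sqrt Lam * (V2 (s * z))\<^sup>2 * p1 z
            + 2 * sqrt Lam * V1 (s * z) * V2 (s * z) * p2 z = h1 z \<and>
          - deriv (deriv p2) z + sqrt Lam * (V1 (s * z))\<^sup>2 * p2 z
            + 2 * sqrt Lam * V1 (s * z) * V2 (s * z) * p1 z = h2 z) \<and>
       p1 (-L) = 0 \<and> p1 L = 0 \<and> p2 (-L) = 0 \<and> p2 L = 0)"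

end

theory Submission
  imports Defs "HOL-Real_Asymp.Real_Asymp"
begin

text \<open>After the substitution \<open>u\<^sub>2 = -p\<^sub>2\<close> the system reads \<open>u\<^sub>1'' = P u\<^sub>1 - K u\<^sub>2 - h\<^sub>1\<close>,
  \<open>u\<^sub>2'' = R u\<^sub>2 - K u\<^sub>1 + h\<^sub>2\<close> with \<open>K \<ge> 0\<close>, and \<open>(V\<^sub>1', -V\<^sub>2')(\<Lambda>\<^sup>1\<^sup>/\<^sup>4 z)\<close> is a positive solution of
  its homogeneous version. The Picone (ground-state) identity rewrites the energy \<open>\<integral> u\<^sub>1 h\<^sub>1 - u\<^sub>2 h\<^sub>2\<close>
  as an integral of squares. On each half of \<open>I\<^sub>\<Lambda>\<close> one of \<open>P, R\<close> is bounded below by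
  \<open>\<Lambda>\<^sup>1\<^sup>/\<^sup>2 V\<^sub>1(0)\<^sup>2\<close>, which controls one component, and a Hardy inequality around the ground state
  controls the other; this bounds \<open>\<integral> u\<^sup>2\<close>, \<open>\<integral> u'\<^sup>2\<close> and hence \<open>sup |u|\<close> by \<open>\<Lambda>\<^sup>-\<^sup>1\<^sup>/\<^sup>2\<close> times a power of
  \<open>ln \<Lambda>\<close> times \<open>\<parallel>h\<parallel>\<^sub>\<infinity>\<close>; the factor \<open>\<Lambda>\<^sup>\<alpha>\<close> absorbs the logarithms. The same estimate gives
  uniqueness, shooting from one endpoint gives existence, and the derivative bound follows by
  interpolation between \<open>u\<close> and \<open>u'' \<close> read off from the equation.\<close>

section \<open>Linear integral equations and second-order systems\<close>

lemma exp_affine_has_integral: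
  fixes k a y :: real
  assumes "k > 0" "a \<le> y"
  shows "((\<lambda>t. exp (k * (t - a))) has_integral (exp (k * (y - a)) - 1) / k) {a..y}"
proof -
  have k: "k \<noteq> 0" using assms(1) by simp
  have "((\<lambda>t. exp (k * (t - a))) has_integral (exp (k * (y - a)) / k - exp (k * (a - a)) / k)) {a..y}"
  proof (rule fundamental_theorem_of_calculus)
    fix x assume "x \<in> {a..y}"
    have "((\<lambda>t. exp (k * (t - a)) / k) has_real_derivative exp (k * (x - a)) * (k * 1) / k) (at x)"
      using k by (intro derivative_eq_intros) auto
    then show "((\<lambda>t. exp (k * (t - a)) / k) has_vector_derivative exp (k * (x - a))) (at x within {a..y})"
      using k by (simp add: has_real_derivative_iff_has_vector_derivative[symmetric] has_field_derivative_at_within)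
  qed (use assms in auto)
  then show ?thesis by (simp add: diff_divide_distrib)
qed

lemma weighted_integral_le_half:
  fixes g :: "real \<Rightarrow> 'a::banach"
  assumes "c \<ge> 0" "D \<ge> 0" "a \<le> y" "g integrable_on {a..y}"
    and "\<And>t. t \<in> {a..y} \<Longrightarrow> norm (g t) \<le> c * D * exp ((2 * c + 1) * (t - a))"
  shows "exp (- (2 * c + 1) * (y - a)) * norm (integral {a..y} g) \<le> D / 2"
proof -
  define k where "k = 2 * c + 1"
  have k: "k > 0" "c / k \<le> 1 / 2" using assms(1) by (auto simp: k_def field_simps)
  have int: "((\<lambda>t. c * D * exp (k * (t - a))) has_integral c * D * ((exp (k * (y - a)) - 1) / k)) {a..y}"
    using exp_affine_has_integral[OF k(1) assms(3)] by (rule has_integral_mult_right)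
  have "norm (integral {a..y} g) \<le> c * D * ((exp (k * (y - a)) - 1) / k)"
    using integral_norm_bound_integral[OF assms(4) has_integral_integrable[OF int]] assms(5)
      integral_unique[OF int] unfolding k_def by auto
  then have "exp (- k * (y - a)) * norm (integral {a..y} g)
      \<le> exp (- k * (y - a)) * (c * D * ((exp (k * (y - a)) - 1) / k))"
    by (intro mult_left_mono) auto
  also have "\<dots> = c * D * ((1 - exp (- k * (y - a))) / k)"
    by (simp add: field_simps exp_add[symmetric])
  also have "\<dots> \<le> c * D * (1 / k)"
    using assms k by (intro mult_left_mono divide_right_mono) auto
  also have "\<dots> \<le> D / 2"
    using mult_right_mono[OF k(2) assms(2)] by simp
  finally show ?thesis unfolding k_def .
qed

lemma weighted_lipschitz_integral_le_half:
  fixes F :: "real \<Rightarrow> 'a::banach \<Rightarrow> 'a" and V W :: "real \<Rightarrow> 'a"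
  assumes lip: "\<And>t U W. t \<in> {a..y} \<Longrightarrow> norm (F t U - F t W) \<le> c * norm (U - W)"
    and c: "c \<ge> 0" and ay: "a \<le> y" and D: "\<And>t. norm (V t - W t) \<le> D"
    and int: "(\<lambda>t. F t (exp ((2 * c + 1) * (t - a)) *\<^sub>R V t) - F t (exp ((2 * c + 1) * (t - a)) *\<^sub>R W t))
      integrable_on {a..y}"
  shows "exp (- (2 * c + 1) * (y - a)) * norm (integral {a..y}
      (\<lambda>t. F t (exp ((2 * c + 1) * (t - a)) *\<^sub>R V t) - F t (exp ((2 * c + 1) * (t - a)) *\<^sub>R W t))) \<le> D / 2"
proof (rule weighted_integral_le_half[OF c _ ay int])
  show "D \<ge> 0" using D[of a] norm_ge_zero order_trans by blast
  fix t assume "t \<in> {a..y}"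
  define E where "E = exp ((2 * c + 1) * (t - a))"
  have "norm (F t (E *\<^sub>R V t) - F t (E *\<^sub>R W t)) \<le> c * norm (E *\<^sub>R V t - E *\<^sub>R W t)"
    using lip \<open>t \<in> {a..y}\<close> by blast
  also have "\<dots> = c * (E * norm (V t - W t))"
    unfolding E_def by (simp add: scaleR_diff_right[symmetric])
  also have "\<dots> \<le> c * (E * D)"
    using D c unfolding E_def by (intro mult_left_mono) auto
  finally show "norm (F t (E *\<^sub>R V t) - F t (E *\<^sub>R W t)) \<le> c * D * E"
    by (simp add: algebra_simps)
qed

lemma continuous_on_clamp_bcontfun:
  fixes f :: "real \<Rightarrow> 'a::real_normed_vector"
  assumes "a \<le> b" "continuous_on {a..b} f"
  shows "(\<lambda>x. f (max a (min b x))) \<in> bcontfun"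
proof -
  have "continuous_on UNIV (\<lambda>x. f (max a (min b x)))"
    by (rule continuous_on_compose2[OF assms(2)]) (use assms(1) in \<open>auto intro!: continuous_intros\<close>)
  moreover obtain B where "\<And>x. x \<in> {a..b} \<Longrightarrow> norm (f x) \<le> B"
    using continuous_on_compact_bound[OF compact_Icc assms(2)] by blast
  moreover have "max a (min b x) \<in> {a..b}" for x using assms(1) by auto
  ultimately show ?thesis by (intro bcontfun_normI[of _ B]) auto
qed

text \<open>Picard iteration in Bielecki's weighted norm: writing \<open>U t = exp (k (t - a)) V t\<close> with
  \<open>k = 2 c + 1\<close>, the integral operator acting on \<open>V\<close> is a \<open>1/2\<close>-contraction on bounded continuous
  functions, extended from \<open>[a, b]\<close> to \<open>\<real>\<close> by clamping.\<close>

lemma integral_equation_solvable: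
  fixes F :: "real \<Rightarrow> 'a::banach \<Rightarrow> 'a" and U0 :: 'a
  assumes ab: "a \<le> b"
    and contF: "continuous_on ({a..b} \<times> UNIV) (\<lambda>p. F (fst p) (snd p))"
    and lip: "\<And>t U W. t \<in> {a..b} \<Longrightarrow> norm (F t U - F t W) \<le> c * norm (U - W)"
    and c: "c \<ge> 0"
  shows "\<exists>U. continuous_on {a..b} U \<and> (\<forall>x\<in>{a..b}. U x = U0 + integral {a..x} (\<lambda>t. F t (U t)))"
proof -
  define k where "k = 2 * c + 1"
  define cl where "cl x = max a (min b x)" for x
  have cl: "cl x \<in> {a..b}" "x \<in> {a..b} \<Longrightarrow> cl x = x" for x using ab unfolding cl_def by auto
  define E where "E t = exp (k * (t - a))" for t
  define G where "G V t = F t (E t *\<^sub>R apply_bcontfun V t)" for V :: "real \<Rightarrow>\<^sub>C 'a" and t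
  have Gcont: "continuous_on {a..b} (G V)" for V
    unfolding G_def E_def
    by (rule continuous_on_compose2[OF contF, of _ "\<lambda>t. (t, _ t)", simplified])
      (auto intro!: continuous_intros)
  have Gint: "G V integrable_on {a..y}" if "y \<in> {a..b}" for V y
    by (rule integrable_subinterval_real[OF integrable_continuous_real[OF Gcont]]) (use that in auto)
  define psi where "psi V y = exp (- k * (y - a)) *\<^sub>R (U0 + integral {a..y} (G V))" for V y
  have psicont: "continuous_on {a..b} (psi V)" for V
    unfolding psi_def by (intro continuous_intros indefinite_integral_continuous_1 integrable_continuous_real Gcont)
  define Phi where "Phi V = Bcontfun (\<lambda>x. psi V (cl x))" for V
  have Phi_apply: "apply_bcontfun (Phi V) x = psi V (cl x)" for V x
    unfolding Phi_def cl_def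
    using continuous_on_clamp_bcontfun[OF ab psicont] by (simp add: Bcontfun_inverse)
  have "dist (Phi V) (Phi W) \<le> (1/2) * dist V W" for V W
  proof (rule dist_bound)
    fix x
    have int: "(\<lambda>t. G V t - G W t) integrable_on {a..cl x}"
      using Gint[OF cl(1), of V] Gint[OF cl(1), of W] by (rule integrable_diff)
    have "norm (apply_bcontfun V t - apply_bcontfun W t) \<le> dist V W" for t
      using dist_bounded[of V t W] by (simp add: dist_norm)
    then have "exp (- k * (cl x - a)) * norm (integral {a..cl x} (\<lambda>t. G V t - G W t)) \<le> dist V W / 2"
      using int lip c cl(1)[of x] unfolding k_def G_def E_def
      by (intro weighted_lipschitz_integral_le_half) auto
    then show "dist (apply_bcontfun (Phi V) x) (apply_bcontfun (Phi W) x) \<le> (1/2) * dist V W"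
      unfolding Phi_apply psi_def dist_norm using Gint[OF cl(1)]
      by (simp add: scaleR_diff_right[symmetric] integral_diff)
  qed
  then obtain V where V: "Phi V = V" using banach_fix_type[of "1/2" Phi] by auto
  define U where "U x = E x *\<^sub>R apply_bcontfun V x" for x
  have "U x = U0 + integral {a..x} (\<lambda>t. F t (U t))" if x: "x \<in> {a..b}" for x
  proof -
    have "U x = E x *\<^sub>R psi V x" unfolding U_def using Phi_apply[of V x] cl(2)[OF x] V by simp
    also have "\<dots> = U0 + integral {a..x} (G V)"
      unfolding psi_def E_def by (simp add: exp_add[symmetric])
    finally show ?thesis unfolding G_def U_def .
  qed
  moreover have "continuous_on {a..b} U" unfolding U_def E_def by (intro continuous_intros) auto
  ultimately show ?thesis by blast
qed

lemma integral_equation_has_vector_derivative: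
  fixes F :: "real \<Rightarrow> 'a::banach \<Rightarrow> 'a"
  assumes Ucont: "continuous_on {a..b} U"
    and Ueq: "\<forall>x\<in>{a..b}. U x = U0 + integral {a..x} (\<lambda>t. F t (U t))"
    and contF: "continuous_on ({a..b} \<times> UNIV) (\<lambda>p. F (fst p) (snd p))"
    and x: "x \<in> {a<..<b}"
  shows "(U has_vector_derivative F x (U x)) (at x)"
proof -
  have "continuous_on {a..b} (\<lambda>t. F t (U t))"
    by (rule continuous_on_compose2[OF contF, of _ "\<lambda>t. (t, U t)", simplified])
      (auto intro!: continuous_intros Ucont)
  then have "((\<lambda>y. integral {a..y} (\<lambda>t. F t (U t))) has_vector_derivative F x (U x)) (at x within {a..b})"
    using x by (intro integral_has_vector_derivative) auto
  moreover have "at x within {a..b} = at x" using x by (intro at_within_interior) simp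
  ultimately have "((\<lambda>y. U0 + integral {a..y} (\<lambda>t. F t (U t))) has_vector_derivative F x (U x)) (at x)"
    by (auto intro!: derivative_eq_intros)
  then show ?thesis
    by (rule has_vector_derivative_transform_within_open[of _ _ _ "{a<..<b}"]) (use x Ueq in auto)
qed

definition odesys_sol :: "real \<Rightarrow> real \<Rightarrow> (real \<Rightarrow> real) \<Rightarrow> (real \<Rightarrow> real) \<Rightarrow> (real \<Rightarrow> real)
   \<Rightarrow> (real \<Rightarrow> real) \<Rightarrow> (real \<Rightarrow> real) \<Rightarrow> (real \<Rightarrow> real) \<Rightarrow> (real \<Rightarrow> real)
   \<Rightarrow> (real \<Rightarrow> real) \<Rightarrow> (real \<Rightarrow> real) \<Rightarrow> bool" where
  "odesys_sol a b P K R f1 f2 u1 u2 v1 v2 \<longleftrightarrow>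
     continuous_on {a..b} u1 \<and> continuous_on {a..b} u2 \<and>
     (\<forall>x\<in>{a<..<b}. (u1 has_real_derivative v1 x) (at x) \<and> (u2 has_real_derivative v2 x) (at x) \<and>
        (v1 has_real_derivative (P x * u1 x - K x * u2 x - f1 x)) (at x) \<and>
        (v2 has_real_derivative (R x * u2 x - K x * u1 x - f2 x)) (at x))"

lemma odesys_sol_lincomb:
  assumes "odesys_sol a b P K R f1 f2 u1 u2 v1 v2" "odesys_sol a b P K R g1 g2 w1 w2 z1 z2"
  shows "odesys_sol a b P K R (\<lambda>x. p * f1 x + q * g1 x) (\<lambda>x. p * f2 x + q * g2 x)
     (\<lambda>x. p * u1 x + q * w1 x) (\<lambda>x. p * u2 x + q * w2 x) (\<lambda>x. p * v1 x + q * z1 x) (\<lambda>x. p * v2 x + q * z2 x)"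
  unfolding odesys_sol_def
proof (intro conjI ballI)
  show "continuous_on {a..b} (\<lambda>x. p * u1 x + q * w1 x)" "continuous_on {a..b} (\<lambda>x. p * u2 x + q * w2 x)"
    using assms unfolding odesys_sol_def by (auto intro!: continuous_intros)
  fix x assume x: "x \<in> {a<..<b}"
  have A: "(u1 has_real_derivative v1 x) (at x)" "(u2 has_real_derivative v2 x) (at x)"
        "(v1 has_real_derivative (P x * u1 x - K x * u2 x - f1 x)) (at x)"
        "(v2 has_real_derivative (R x * u2 x - K x * u1 x - f2 x)) (at x)"
    using assms(1) x unfolding odesys_sol_def by auto
  have B: "(w1 has_real_derivative z1 x) (at x)" "(w2 has_real_derivative z2 x) (at x)"
        "(z1 has_real_derivative (P x * w1 x - K x * w2 x - g1 x)) (at x)"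
        "(z2 has_real_derivative (R x * w2 x - K x * w1 x - g2 x)) (at x)"
    using assms(2) x unfolding odesys_sol_def by auto
  show "((\<lambda>x. p * u1 x + q * w1 x) has_real_derivative p * v1 x + q * z1 x) (at x)"
       "((\<lambda>x. p * u2 x + q * w2 x) has_real_derivative p * v2 x + q * z2 x) (at x)"
    using A(1,2) B(1,2) by (auto intro!: derivative_eq_intros)
  show "((\<lambda>x. p * v1 x + q * z1 x) has_real_derivative
          P x * (p * u1 x + q * w1 x) - K x * (p * u2 x + q * w2 x) - (p * f1 x + q * g1 x)) (at x)"
    using A(3) B(3) by (auto intro!: derivative_eq_intros simp: algebra_simps)
  show "((\<lambda>x. p * v2 x + q * z2 x) has_real_derivative
          R x * (p * u2 x + q * w2 x) - K x * (p * u1 x + q * w1 x) - (p * f2 x + q * g2 x)) (at x)"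
    using A(4) B(4) by (auto intro!: derivative_eq_intros simp: algebra_simps)
qed

lemma has_vector_derivative_fst:
  "(U has_vector_derivative D) F \<Longrightarrow> ((\<lambda>x. fst (U x)) has_vector_derivative fst D) F"
  using has_derivative_fst[of U "\<lambda>h. h *\<^sub>R D" F] by (simp add: has_vector_derivative_def)

lemma has_vector_derivative_snd:
  "(U has_vector_derivative D) F \<Longrightarrow> ((\<lambda>x. snd (U x)) has_vector_derivative snd D) F"
  using has_derivative_snd[of U "\<lambda>h. h *\<^sub>R D" F] by (simp add: has_vector_derivative_def)

lemma has_vector_derivative_components4:
  fixes U :: "real \<Rightarrow> real \<times> real \<times> real \<times> real"
  assumes "(U has_vector_derivative D) F"
  shows "((\<lambda>x. fst (U x)) has_real_derivative fst D) F"
    "((\<lambda>x. fst (snd (U x))) has_real_derivative fst (snd D)) F"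
    "((\<lambda>x. fst (snd (snd (U x)))) has_real_derivative fst (snd (snd D))) F"
    "((\<lambda>x. snd (snd (snd (U x)))) has_real_derivative snd (snd (snd D))) F"
  using has_vector_derivative_fst[OF assms] has_vector_derivative_fst[OF has_vector_derivative_snd[OF assms]]
    has_vector_derivative_fst[OF has_vector_derivative_snd[OF has_vector_derivative_snd[OF assms]]]
    has_vector_derivative_snd[OF has_vector_derivative_snd[OF has_vector_derivative_snd[OF assms]]]
  by (simp_all add: has_real_derivative_iff_has_vector_derivative)

lemma norm_first_order_field_le:
  fixes d1 d2 e1 e2 P K R M :: real
  assumes "\<bar>P\<bar> \<le> M" "\<bar>K\<bar> \<le> M" "\<bar>R\<bar> \<le> M"
  shows "norm (e1, e2, P * d1 - K * d2, R * d2 - K * d1) \<le> 4 * (1 + 2 * M) * norm (d1, d2, e1, e2)"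
proof -
  define n where "n = norm (d1, d2, e1, e2)"
  have comp: "\<bar>d1\<bar> \<le> n" "\<bar>d2\<bar> \<le> n" "\<bar>e1\<bar> \<le> n" "\<bar>e2\<bar> \<le> n"
    unfolding n_def using norm_fst_le[of d1 "(d2,e1,e2)"] norm_snd_le[of "(d2,e1,e2)" d1]
      norm_fst_le[of d2 "(e1,e2)"] norm_snd_le[of "(e1,e2)" d2] norm_fst_le[of e1 e2] norm_snd_le[of e2 e1]
    by (auto intro: order_trans)
  have M: "M \<ge> 0" using assms(1) by linarith
  have prod: "\<bar>X * d\<bar> \<le> M * n" if "\<bar>X\<bar> \<le> M" "\<bar>d\<bar> \<le> n" for X d
    unfolding abs_mult using that M by (intro mult_mono) auto
  have "norm (e1, e2, P * d1 - K * d2, R * d2 - K * d1)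
      \<le> \<bar>e1\<bar> + \<bar>e2\<bar> + \<bar>P * d1 - K * d2\<bar> + \<bar>R * d2 - K * d1\<bar>"
    using norm_Pair_le[of e1 "(e2, P * d1 - K * d2, R * d2 - K * d1)"]
      norm_Pair_le[of e2 "(P * d1 - K * d2, R * d2 - K * d1)"]
      norm_Pair_le[of "P * d1 - K * d2" "R * d2 - K * d1"] by simp
  also have "\<dots> \<le> 4 * (1 + 2 * M) * n"
    using comp prod[OF assms(1) comp(1)] prod[OF assms(2) comp(2)] prod[OF assms(3) comp(2)]
      prod[OF assms(2) comp(1)] M by (simp add: algebra_simps) linarith
  finally show ?thesis unfolding n_def .
qed

lemma continuous_on_compose_fst:
  "continuous_on S P \<Longrightarrow> continuous_on (S \<times> T) (\<lambda>p. P (fst p))"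
  by (rule continuous_on_compose2) (auto intro: continuous_intros)

lemma odesys_ivp_solvable:
  assumes ab: "a < b"
    and cP: "continuous_on {a..b} P" and cK: "continuous_on {a..b} K" and cR: "continuous_on {a..b} R"
    and cf1: "continuous_on {a..b} f1" and cf2: "continuous_on {a..b} f2"
  shows "\<exists>u1 u2 v1 v2. odesys_sol a b P K R f1 f2 u1 u2 v1 v2 \<and> u1 a = 0 \<and> u2 a = 0 \<and>
            continuous_on {a..b} v1 \<and> continuous_on {a..b} v2 \<and> v1 a = d1 \<and> v2 a = d2"
proof -
  define F where "F t U = (fst (snd (snd U)), snd (snd (snd U)),
       P t * fst U - K t * fst (snd U) - f1 t, R t * fst (snd U) - K t * fst U - f2 t)"
    for t and U :: "real \<times> real \<times> real \<times> real"
  have contF: "continuous_on ({a..b} \<times> UNIV) (\<lambda>p. F (fst p) (snd p))"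
    unfolding F_def by (intro continuous_intros continuous_on_compose_fst cP cK cR cf1 cf2)
  obtain MP MK MR where "\<And>t. t \<in> {a..b} \<Longrightarrow> norm (P t) \<le> MP"
    "\<And>t. t \<in> {a..b} \<Longrightarrow> norm (K t) \<le> MK" "\<And>t. t \<in> {a..b} \<Longrightarrow> norm (R t) \<le> MR"
    using continuous_on_compact_bound[OF compact_Icc] cP cK cR by metis
  then have M: "\<bar>P t\<bar> \<le> max MP (max MK MR)" "\<bar>K t\<bar> \<le> max MP (max MK MR)" "\<bar>R t\<bar> \<le> max MP (max MK MR)"
    if "t \<in> {a..b}" for t
    using that by (auto simp: le_max_iff_disj)
  define c where "c = 4 * (1 + 2 * max MP (max MK MR))"
  have lip: "norm (F t U - F t W) \<le> c * norm (U - W)" if "t \<in> {a..b}" for t U W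
  proof -
    obtain d1 d2 e1 e2 where D: "U - W = (d1, d2, e1, e2)" by (metis prod.collapse)
    have "F t U - F t W = (e1, e2, P t * d1 - K t * d2, R t * d2 - K t * d1)"
      using D unfolding F_def by (cases U, cases W) (auto simp: algebra_simps)
    then show ?thesis unfolding c_def D using norm_first_order_field_le[OF M[OF that]] by simp
  qed
  have "c \<ge> 0" unfolding c_def using M(1)[of a] ab by auto
  then obtain U where Uc: "continuous_on {a..b} U"
    and Ueq: "\<forall>x\<in>{a..b}. U x = (0, 0, d1, d2) + integral {a..x} (\<lambda>t. F t (U t))"
    using integral_equation_solvable[of a b F c "(0,0,d1,d2)"] ab contF lip by auto
  define u1 where "u1 x = fst (U x)" for x
  define u2 where "u2 x = fst (snd (U x))" for x
  define v1 where "v1 x = fst (snd (snd (U x)))" for x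
  define v2 where "v2 x = snd (snd (snd (U x)))" for x
  have "(u1 has_real_derivative v1 x) (at x) \<and> (u2 has_real_derivative v2 x) (at x) \<and>
        (v1 has_real_derivative (P x * u1 x - K x * u2 x - f1 x)) (at x) \<and>
        (v2 has_real_derivative (R x * u2 x - K x * u1 x - f2 x)) (at x)" if "x \<in> {a<..<b}" for x
    using has_vector_derivative_components4[OF integral_equation_has_vector_derivative[OF Uc Ueq contF that]]
    unfolding u1_def u2_def v1_def v2_def F_def by simp
  moreover have "continuous_on {a..b} u1" "continuous_on {a..b} u2"
    "continuous_on {a..b} v1" "continuous_on {a..b} v2"
    unfolding u1_def u2_def v1_def v2_def using Uc by (auto intro!: continuous_intros)
  moreover have "U a = (0, 0, d1, d2)" using Ueq ab by auto
  ultimately have "odesys_sol a b P K R f1 f2 u1 u2 v1 v2 \<and> u1 a = 0 \<and> u2 a = 0 \<and>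
      continuous_on {a..b} v1 \<and> continuous_on {a..b} v2 \<and> v1 a = d1 \<and> v2 a = d2"
    unfolding odesys_sol_def by (simp add: u1_def u2_def v1_def v2_def)
  then show ?thesis by blast
qed

lemma has_integral_0_if_equal_ends:
  fixes f f' :: "real \<Rightarrow> real"
  assumes "a \<le> b" "continuous_on {a..b} f" "f a = f b"
    "\<forall>x\<in>{a<..<b}. (f has_real_derivative f' x) (at x)"
  shows "(f' has_integral 0) {a..b}"
proof -
  have "(f' has_integral (f b - f a)) {a..b}"
    using assms by (intro fundamental_theorem_of_calculus_interior)
      (auto simp: has_real_derivative_iff_has_vector_derivative)
  then show ?thesis using assms(3) by simp
qed

lemma integral_le_on_interior:
  fixes f g :: "real \<Rightarrow> real"
  assumes "f integrable_on {a..b}" "g integrable_on {a..b}" "\<forall>x\<in>{a<..<b}. f x \<le> g x"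
  shows "integral {a..b} f \<le> integral {a..b} g"
proof -
  define f2 where "f2 x = (if x \<in> {a<..<b} then f x else g x)" for x
  have sp: "\<And>x. x \<in> {a..b} - {a, b} \<Longrightarrow> f2 x = f x" unfolding f2_def by auto
  have "integral {a..b} f2 = integral {a..b} f"
    by (rule integral_spike[of "{a,b}"]) (use sp in auto)
  moreover have "f2 integrable_on {a..b}"
    by (rule integrable_spike_finite[of "{a,b}" _ _ f]) (use sp assms(1) in auto)
  then have "integral {a..b} f2 \<le> integral {a..b} g"
    using assms unfolding f2_def by (intro integral_le) auto
  ultimately show ?thesis by simp
qed

lemma abs_le_of_deriv_bounded:
  fixes phi phi' :: "real \<Rightarrow> real"
  assumes d: "\<forall>t\<in>{a<..<b}. (phi has_real_derivative phi' t) (at t)"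
    and bd: "\<forall>t\<in>{a<..<b}. \<bar>phi' t\<bar> \<le> M"
    and c: "c \<in> {a<..<b}" and x: "x \<in> {a<..<b}"
  shows "\<bar>phi x\<bar> \<le> \<bar>phi c\<bar> + M * (b - a)"
proof -
  have gen: "\<bar>phi y - phi z\<bar> \<le> M * (b - a)" if yz: "z < y" "z \<in> {a<..<b}" "y \<in> {a<..<b}" for y z
  proof -
    obtain t where t: "z < t" "t < y" "phi y - phi z = (y - z) * phi' t"
      using MVT2[of z y phi phi'] d yz by force
    have "\<bar>phi y - phi z\<bar> = (y - z) * \<bar>phi' t\<bar>" using t by (simp add: abs_mult)
    also have "\<dots> \<le> (b - a) * M" using yz t bd by (intro mult_mono) auto
    finally show ?thesis by (simp add: mult.commute)
  qed
  have "M \<ge> 0" using bd c by force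
  then show ?thesis
    using gen[of x c] gen[of c x] c x by (cases x c rule: linorder_cases) auto
qed

lemma continuous_on_zero_at_ends:
  fixes th w :: "real \<Rightarrow> real"
  assumes wc: "continuous_on {a..b} w" and wa: "w a = 0" and wb: "w b = 0"
    and bd: "\<forall>x\<in>{a<..<b}. \<bar>th x\<bar> \<le> M * \<bar>w x\<bar>" and ct: "\<forall>x\<in>{a<..<b}. isCont th x"
  shows "continuous_on {a..b} (\<lambda>x. if x \<in> {a<..<b} then th x else 0)"
  unfolding continuous_on_eq_continuous_within
proof
  fix x assume x: "x \<in> {a..b}"
  define h where "h = (\<lambda>x. if x \<in> {a<..<b} then th x else 0)"
  show "continuous (at x within {a..b}) h"
  proof (cases "x \<in> {a<..<b}")
    case True
    have "eventually (\<lambda>y. h y = th y) (nhds x)"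
      unfolding eventually_nhds h_def using True by (intro exI[of _ "{a<..<b}"]) auto
    then have "isCont h x" using ct True isCont_cong by blast
    then show ?thesis by (rule continuous_at_imp_continuous_within)
  next
    case False
    then have hx: "h x = 0" "w x = 0" unfolding h_def using x wa wb by auto
    have "(w \<longlongrightarrow> w x) (at x within {a..b})"
      using wc x unfolding continuous_on_eq_continuous_within continuous_within by blast
    then have "((\<lambda>y. \<bar>M\<bar> * \<bar>w y\<bar>) \<longlongrightarrow> \<bar>M\<bar> * \<bar>w x\<bar>) (at x within {a..b})"
      by (intro tendsto_intros)
    then have lim: "((\<lambda>y. \<bar>M\<bar> * \<bar>w y\<bar>) \<longlongrightarrow> 0) (at x within {a..b})" using hx by simp
    have "norm (h y) \<le> \<bar>M\<bar> * \<bar>w y\<bar>" for y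
    proof (cases "y \<in> {a<..<b}")
      case True
      then have "\<bar>th y\<bar> \<le> M * \<bar>w y\<bar>" using bd by blast
      also have "\<dots> \<le> \<bar>M\<bar> * \<bar>w y\<bar>" by (intro mult_right_mono) auto
      finally show ?thesis using True unfolding h_def by simp
    qed (auto simp: h_def)
    then have "(h \<longlongrightarrow> 0) (at x within {a..b})"
      by (intro Lim_null_comparison[OF _ lim]) simp
    then show ?thesis unfolding continuous_within hx .
  qed
qed

text \<open>Integration by parts for a function vanishing at both ends; \<open>u'\<close> need not extend
  continuously to the boundary, only \<open>u''\<close> does.\<close>

lemma dirichlet_integration_by_parts:
  fixes u u' u'' :: "real \<Rightarrow> real"
  assumes ab: "a < b" and cu: "continuous_on {a..b} u" and ua: "u a = 0" and ub: "u b = 0"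
    and d: "\<forall>x\<in>{a<..<b}. (u has_real_derivative u' x) (at x) \<and> (u' has_real_derivative u'' x) (at x)"
    and cu'': "continuous_on {a..b} u''"
  shows "((\<lambda>x. (u' x)\<^sup>2 + u x * u'' x) has_integral 0) {a..b}"
proof -
  obtain M where M: "\<And>x. x \<in> {a..b} \<Longrightarrow> norm (u'' x) \<le> M"
    using continuous_on_compact_bound[OF compact_Icc cu''] by blast
  define c where "c = (a + b) / 2"
  have c: "c \<in> {a<..<b}" using ab unfolding c_def by auto
  define Bd where "Bd = \<bar>u' c\<bar> + M * (b - a)"
  have Bd: "\<bar>u' x\<bar> \<le> Bd" if "x \<in> {a<..<b}" for x
    unfolding Bd_def by (rule abs_le_of_deriv_bounded[OF _ _ c that]) (use d M in auto)
  define h where "h x = (if x \<in> {a<..<b} then u x * u' x else 0)" for x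
  have "continuous_on {a..b} h" unfolding h_def
  proof (rule continuous_on_zero_at_ends[OF cu ua ub])
    show "\<forall>x\<in>{a<..<b}. \<bar>u x * u' x\<bar> \<le> Bd * \<bar>u x\<bar>"
      using mult_left_mono[OF Bd abs_ge_zero] by (simp add: abs_mult mult.commute)
    show "\<forall>x\<in>{a<..<b}. isCont (\<lambda>x. u x * u' x) x"
      using d DERIV_isCont by (blast intro: isCont_mult)
  qed
  moreover have "(h has_real_derivative ((u' x)\<^sup>2 + u x * u'' x)) (at x)" if x: "x \<in> {a<..<b}" for x
  proof -
    have "((\<lambda>x. u x * u' x) has_real_derivative ((u' x)\<^sup>2 + u x * u'' x)) (at x)"
      using d x by (auto intro!: derivative_eq_intros simp: power2_eq_square)
    then show ?thesis
      by (rule has_field_derivative_transform_within_open[of _ _ _ "{a<..<b}"]) (use x in \<open>auto simp: h_def\<close>)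
  qed
  moreover have "h a = h b" by (simp add: h_def)
  ultimately show ?thesis using ab by (intro has_integral_0_if_equal_ends[of a b h]) auto
qed

text \<open>A Hardy inequality with weight \<open>x\<close>: integrate \<open>(x w\<^sup>2)' = w\<^sup>2 + 2 x w w'\<close> and absorb the
  cross term.\<close>

lemma hardy_inequality:
  fixes w w' N :: "real \<Rightarrow> real"
  assumes cd: "c \<le> d" and wc: "continuous_on {c..d} w"
    and wd: "\<forall>x\<in>{c<..<d}. (w has_real_derivative w' x) (at x)"
    and ends: "d * (w d)\<^sup>2 = c * (w c)\<^sup>2"
    and Ni: "N integrable_on {c..d}" and Q: "Q \<ge> 0"
    and pt: "\<forall>x\<in>{c<..<d}. x\<^sup>2 * (w' x)\<^sup>2 \<le> Q * N x"
  shows "integral {c..d} (\<lambda>x. (w x)\<^sup>2) \<le> 4 * Q * integral {c..d} N"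
proof -
  have I0: "((\<lambda>x. (w x)\<^sup>2 + 2 * (x * w x * w' x)) has_integral 0) {c..d}"
  proof (rule has_integral_0_if_equal_ends[OF cd, of "\<lambda>x. x * (w x)\<^sup>2"])
    show "continuous_on {c..d} (\<lambda>x. x * (w x)\<^sup>2)" using wc by (intro continuous_intros)
    show "\<forall>x\<in>{c<..<d}. ((\<lambda>x. x * (w x)\<^sup>2) has_real_derivative (w x)\<^sup>2 + 2 * (x * w x * w' x)) (at x)"
      using wd by (auto intro!: derivative_eq_intros simp: algebra_simps)
  qed (use ends in simp)
  have wi: "(\<lambda>x. (w x)\<^sup>2) integrable_on {c..d}"
    using wc by (intro integrable_continuous_real continuous_intros)
  have "integral {c..d} (\<lambda>x. (w x)\<^sup>2 / 2 - 2 * Q * N x)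
      \<le> integral {c..d} (\<lambda>x. (w x)\<^sup>2 + 2 * (x * w x * w' x))"
  proof (rule integral_le_on_interior)
    show "(\<lambda>x. (w x)\<^sup>2 / 2 - 2 * Q * N x) integrable_on {c..d}"
      using wi Ni by (intro integrable_diff integrable_on_mult_right integrable_on_divide) auto
    show "\<forall>x\<in>{c<..<d}. (w x)\<^sup>2 / 2 - 2 * Q * N x \<le> (w x)\<^sup>2 + 2 * (x * w x * w' x)"
    proof
      fix x assume x: "x \<in> {c<..<d}"
      have "0 \<le> (w x + 2 * x * w' x)\<^sup>2" by simp
      then have "- 2 * (x * w x * w' x) \<le> (w x)\<^sup>2 / 2 + 2 * (x\<^sup>2 * (w' x)\<^sup>2)"
        by (simp add: power2_eq_square algebra_simps)
      then show "(w x)\<^sup>2 / 2 - 2 * Q * N x \<le> (w x)\<^sup>2 + 2 * (x * w x * w' x)"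
        using pt x by fastforce
    qed
  qed (use I0 in blast)
  also have "\<dots> = 0" using I0 by (rule integral_unique)
  finally show ?thesis
    using wi Ni by (simp add: integral_diff integrable_on_divide integrable_on_mult_right)
qed

text \<open>The ground-state form of the Hardy inequality: for \<open>w = u / g\<close> one has
  \<open>g\<^sup>2 w'\<^sup>2 = (u' - g' u / g)\<^sup>2\<close>, so this density controls \<open>u\<^sup>2\<close> when \<open>g\<close> is bounded above and below.\<close>

lemma hardy_inequality_quotient:
  fixes u u' g g' N :: "real \<Rightarrow> real"
  assumes cd: "c \<le> d" and cu: "continuous_on {c..d} u" and cg: "continuous_on {c..d} g"
    and g: "\<forall>x\<in>{c..d}. m \<le> g x" and m: "m > 0"
    and der: "\<forall>x\<in>{c<..<d}. (u has_real_derivative u' x) (at x) \<and> (g has_real_derivative g' x) (at x)"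
    and ends: "d * (u d / g d)\<^sup>2 = c * (u c / g c)\<^sup>2"
    and Ni: "N integrable_on {c..d}"
    and Nb: "\<forall>x\<in>{c<..<d}. (u' x - g' x / g x * u x)\<^sup>2 \<le> N x"
    and xb: "\<forall>x\<in>{c<..<d}. x\<^sup>2 \<le> L\<^sup>2"
  shows "integral {c..d} (\<lambda>x. (u x / g x)\<^sup>2) \<le> 4 * (L\<^sup>2 / m\<^sup>2) * integral {c..d} N"
proof -
  have gnz: "g x \<noteq> 0" if "x \<in> {c..d}" for x using g m that by force
  define w' where "w' x = (u' x * g x - u x * g' x) / (g x * g x)" for x
  have "x\<^sup>2 * (w' x)\<^sup>2 \<le> L\<^sup>2 / m\<^sup>2 * N x" if x: "x \<in> {c<..<d}" for x
  proof -
    have "g x \<ge> m" using g x by auto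
    then have gx: "g x \<ge> m" "g x > 0" using m by auto
    have "(w' x)\<^sup>2 = (u' x - g' x / g x * u x)\<^sup>2 / (g x)\<^sup>2"
      unfolding w'_def using gx by (simp add: field_simps power2_eq_square)
    also have "\<dots> \<le> (u' x - g' x / g x * u x)\<^sup>2 / m\<^sup>2"
      using gx m by (intro divide_left_mono power_mono mult_pos_pos) auto
    also have "\<dots> \<le> N x / m\<^sup>2" using Nb x by (intro divide_right_mono) auto
    finally have "(w' x)\<^sup>2 \<le> N x / m\<^sup>2" .
    then have "x\<^sup>2 * (w' x)\<^sup>2 \<le> L\<^sup>2 * (N x / m\<^sup>2)" using xb x by (intro mult_mono) auto
    then show ?thesis by simp
  qed
  moreover have "continuous_on {c..d} (\<lambda>x. u x / g x)" using cu cg gnz by (intro continuous_intros) auto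
  moreover have "\<forall>x\<in>{c<..<d}. ((\<lambda>x. u x / g x) has_real_derivative w' x) (at x)"
    unfolding w'_def using der gnz by (auto intro!: DERIV_divide)
  ultimately show ?thesis
    by (intro hardy_inequality[OF cd _ _ _ Ni]) (use ends in auto)
qed

lemma hardy_inequality_ground_state:
  fixes u u' g g' N :: "real \<Rightarrow> real"
  assumes cd: "c \<le> d" and cu: "continuous_on {c..d} u" and cg: "continuous_on {c..d} g"
    and gb: "\<forall>x\<in>{c..d}. m \<le> g x \<and> g x \<le> B" and m: "m > 0"
    and der: "\<forall>x\<in>{c<..<d}. (u has_real_derivative u' x) (at x) \<and> (g has_real_derivative g' x) (at x)"
    and ends: "d * (u d / g d)\<^sup>2 = c * (u c / g c)\<^sup>2"
    and Ni: "N integrable_on {c..d}"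
    and Nb: "\<forall>x\<in>{c<..<d}. (u' x - g' x / g x * u x)\<^sup>2 \<le> N x"
    and xb: "\<forall>x\<in>{c<..<d}. x\<^sup>2 \<le> L\<^sup>2"
  shows "integral {c..d} (\<lambda>x. (u x)\<^sup>2) \<le> 4 * B\<^sup>2 * L\<^sup>2 / m\<^sup>2 * integral {c..d} N"
proof -
  have g: "g x \<ge> m" "g x \<le> B" "g x > 0" if "x \<in> {c..d}" for x using gb m that by force+
  have "integral {c..d} (\<lambda>x. (u x)\<^sup>2) \<le> integral {c..d} (\<lambda>x. B\<^sup>2 * (u x / g x)\<^sup>2)"
  proof (rule integral_le)
    have "g x \<noteq> 0" if "x \<in> {c..d}" for x using g(3)[OF that] by simp
    then show "(\<lambda>x. (u x)\<^sup>2) integrable_on {c..d}" "(\<lambda>x. B\<^sup>2 * (u x / g x)\<^sup>2) integrable_on {c..d}"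
      using cu cg by (auto intro!: integrable_continuous_real continuous_intros)
    fix x assume x: "x \<in> {c..d}"
    have "(u x)\<^sup>2 = (g x)\<^sup>2 * (u x / g x)\<^sup>2" using g[OF x] by (simp add: power_divide)
    also have "\<dots> \<le> B\<^sup>2 * (u x / g x)\<^sup>2" using g[OF x] by (intro mult_right_mono power_mono) auto
    finally show "(u x)\<^sup>2 \<le> B\<^sup>2 * (u x / g x)\<^sup>2" .
  qed
  also have "\<dots> = B\<^sup>2 * integral {c..d} (\<lambda>x. (u x / g x)\<^sup>2)" by simp
  also have "\<dots> \<le> B\<^sup>2 * (4 * (L\<^sup>2 / m\<^sup>2) * integral {c..d} N)"
    using hardy_inequality_quotient[OF cd cu cg _ m der ends Ni Nb xb] gb by (intro mult_left_mono) auto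
  finally show ?thesis by (simp add: field_simps)
qed

text \<open>Ground-state (Picone) substitution: for positive \<open>g\<^sub>1, g\<^sub>2\<close> the quadratic form of the system
  splits into a sum of squares and terms that are exact derivatives along solutions.\<close>

lemma picone_identity:
  fixes v1 v2 u1 u2 g1 g2 h1 h2 P K R :: real
  assumes "g1 \<noteq> 0" "g2 \<noteq> 0"
  shows "v1\<^sup>2 + v2\<^sup>2 + P * u1\<^sup>2 + R * u2\<^sup>2 - 2 * K * u1 * u2 =
    ((v1 - h1 / g1 * u1)\<^sup>2 + (v2 - h2 / g2 * u2)\<^sup>2 + K * g1 * g2 * (u1 / g1 - u2 / g2)\<^sup>2) +
    (((P * g1 - K * g2) * g1 - h1 * h1) / (g1 * g1) * (u1 * u1) + (v1 * u1 + v1 * u1) * (h1 / g1) +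
     (((R * g2 - K * g1) * g2 - h2 * h2) / (g2 * g2) * (u2 * u2) + (v2 * u2 + v2 * u2) * (h2 / g2)))"
proof -
  have e1: "(v1 - h1 / g1 * u1)\<^sup>2 = v1\<^sup>2 - (v1 * u1 + v1 * u1) * (h1 / g1) + h1 * h1 / (g1 * g1) * (u1 * u1)"
    using assms by (simp add: power2_eq_square field_simps)
  have e2: "(v2 - h2 / g2 * u2)\<^sup>2 = v2\<^sup>2 - (v2 * u2 + v2 * u2) * (h2 / g2) + h2 * h2 / (g2 * g2) * (u2 * u2)"
    using assms by (simp add: power2_eq_square field_simps)
  have e3: "K * g1 * g2 * (u1 / g1 - u2 / g2)\<^sup>2 = K * g2 / g1 * (u1 * u1) - 2 * K * u1 * u2 + K * g1 / g2 * (u2 * u2)"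
    using assms by (simp add: power2_eq_square field_simps)
  have e4: "((P * g1 - K * g2) * g1 - h1 * h1) / (g1 * g1) * (u1 * u1)
      = P * u1\<^sup>2 - K * g2 / g1 * (u1 * u1) - h1 * h1 / (g1 * g1) * (u1 * u1)"
    using assms by (simp add: power2_eq_square field_simps)
  have e5: "((R * g2 - K * g1) * g2 - h2 * h2) / (g2 * g2) * (u2 * u2)
      = R * u2\<^sup>2 - K * g1 / g2 * (u2 * u2) - h2 * h2 / (g2 * g2) * (u2 * u2)"
    using assms by (simp add: power2_eq_square field_simps)
  show ?thesis unfolding e1 e2 e3 e4 e5 by simp
qed

lemma coupling_term_le:
  fixes P R K a b :: real
  assumes "R > 0" "K\<^sup>2 \<le> 4 * P * R"
  shows "2 * K * a * b \<le> R * b\<^sup>2 / 2 + 8 * P * a\<^sup>2"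
proof -
  have "R * (R * b\<^sup>2 / 2 + 8 * P * a\<^sup>2 - 2 * K * a * b)
      = (R * b - 2 * K * a)\<^sup>2 / 2 + 2 * (4 * P * R - K\<^sup>2) * a\<^sup>2"
    by (simp add: power2_eq_square field_simps)
  also have "\<dots> \<ge> 0" using assms(2) by (intro add_nonneg_nonneg mult_nonneg_nonneg) auto
  finally show ?thesis using assms(1) by (simp add: zero_le_mult_iff)
qed

lemma mult_le_eps_square:
  fixes a f e F :: real
  assumes "e > 0" "\<bar>f\<bar> \<le> F"
  shows "a * f \<le> e * a\<^sup>2 + F\<^sup>2 / (4 * e)"
proof -
  have "a * f \<le> \<bar>a\<bar> * \<bar>f\<bar>" by (simp add: abs_mult[symmetric])
  also have "\<dots> \<le> \<bar>a\<bar> * F" using assms(2) by (intro mult_left_mono) auto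
  finally have "a * f \<le> \<bar>a\<bar> * F" .
  moreover have "0 \<le> (2 * e * \<bar>a\<bar> - F)\<^sup>2 / (4 * e)" using assms(1) by simp
  moreover have "(2 * e * \<bar>a\<bar> - F)\<^sup>2 / (4 * e) = e * a\<^sup>2 - \<bar>a\<bar> * F + F\<^sup>2 / (4 * e)"
    using assms(1) by (simp add: power2_eq_square field_simps)
  ultimately show ?thesis by linarith
qed

lemma square_le_integral_of_zero_end:
  fixes u u' G :: "real \<Rightarrow> real"
  assumes ab: "a \<le> x" "x \<le> b" and d: "d > 0"
    and cu: "continuous_on {a..b} u" and ua: "u a = 0"
    and du: "\<forall>t\<in>{a<..<b}. (u has_real_derivative u' t) (at t)"
    and Gi: "G integrable_on {a..b}" and G: "\<And>t. d * (u t)\<^sup>2 + (u' t)\<^sup>2 / d \<le> G t" "\<And>t. 0 \<le> G t"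
  shows "(u x)\<^sup>2 \<le> integral {a..b} G"
proof -
  have ftc: "((\<lambda>t. 2 * (u' t * u t)) has_integral (u x)\<^sup>2 - (u a)\<^sup>2) {a..x}"
  proof (rule fundamental_theorem_of_calculus_interior)
    show "continuous_on {a..x} (\<lambda>t. (u t)\<^sup>2)"
      using continuous_on_subset[OF cu] ab by (auto intro!: continuous_intros)
    fix t assume "t \<in> {a<..<x}"
    then have "(u has_real_derivative u' t) (at t)" using du ab by auto
    then show "((\<lambda>t. (u t)\<^sup>2) has_vector_derivative 2 * (u' t * u t)) (at t)"
      by (auto intro!: derivative_eq_intros simp: has_real_derivative_iff_has_vector_derivative[symmetric])
  qed (use ab in auto)
  have Gi': "G integrable_on {a..x}" "G integrable_on {x..b}"
    using ab by (auto intro: integrable_subinterval_real[OF Gi])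
  have young: "2 * (u' t * u t) \<le> d * (u t)\<^sup>2 + (u' t)\<^sup>2 / d" for t
  proof -
    have "0 \<le> (d * u t - u' t)\<^sup>2 / d" using d by simp
    also have "\<dots> = d * (u t)\<^sup>2 - 2 * (u' t * u t) + (u' t)\<^sup>2 / d"
      using d by (simp add: power2_eq_square field_simps)
    finally show ?thesis by simp
  qed
  have "(u x)\<^sup>2 = integral {a..x} (\<lambda>t. 2 * (u' t * u t))" using integral_unique[OF ftc] ua by simp
  also have "\<dots> \<le> integral {a..x} G"
    using integral_le_on_interior[OF has_integral_integrable[OF ftc] Gi'(1)] young G(1) order_trans by blast
  also have "\<dots> \<le> integral {a..x} G + integral {x..b} G"
    using Gi'(2) G(2) by (simp add: integral_nonneg)
  also have "\<dots> = integral {a..b} G" using Henstock_Kurzweil_Integration.integral_combine[OF ab Gi] .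
  finally show ?thesis .
qed

text \<open>Landau-type interpolation: on an interval of length \<open>h\<close> with endpoint \<open>z\<close>, the mean value
  theorem gives a point where \<open>|\<phi>'| \<le> 2 M\<^sub>0 / h\<close>, and \<open>\<phi>''\<close> moves \<open>\<phi>'\<close> by at most \<open>h M\<^sub>2\<close> from there.\<close>

lemma deriv_bound_interpolation_endpoint:
  fixes phi phi' phi'' :: "real \<Rightarrow> real"
  assumes d1: "\<forall>t\<in>{lo..hi}. (phi has_real_derivative phi' t) (at t)"
    and d2: "\<forall>t\<in>{lo..hi}. (phi' has_real_derivative phi'' t) (at t)"
    and b0: "\<forall>t\<in>{lo..hi}. \<bar>phi t\<bar> \<le> M0" and b2: "\<forall>t\<in>{lo..hi}. \<bar>phi'' t\<bar> \<le> M2"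
    and h: "h > 0" "hi - lo = h" and z: "z = lo \<or> z = hi"
  shows "\<bar>phi' z\<bar> \<le> 2 * M0 / h + h * M2"
proof -
  obtain xi where xi: "lo < xi" "xi < hi" "phi hi - phi lo = (hi - lo) * phi' xi"
    using MVT2[of lo hi phi phi'] h d1 by force
  have "\<bar>phi hi - phi lo\<bar> \<le> 2 * M0" using b0 h by (smt (verit) atLeastAtMost_iff)
  then have "h * \<bar>phi' xi\<bar> \<le> 2 * M0" using xi h by (simp add: abs_mult)
  then have "\<bar>phi' xi\<bar> \<le> 2 * M0 / h" using h by (simp add: field_simps)
  moreover have "\<bar>phi' z - phi' xi\<bar> \<le> h * M2"
  proof (cases "z = xi")
    case False
    define y1 where "y1 = min z xi"
    define y2 where "y2 = max z xi"
    have y12: "y1 < y2" "{y1..y2} \<subseteq> {lo..hi}" using False z xi unfolding y1_def y2_def by auto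
    obtain eta where eta: "y1 < eta" "eta < y2" "phi' y2 - phi' y1 = (y2 - y1) * phi'' eta"
      using MVT2[of y1 y2 phi' phi''] y12 d2 by (meson atLeastAtMost_iff subsetD)
    have "eta \<in> {lo..hi}" using eta y12 by auto
    then have "\<bar>phi'' eta\<bar> \<le> M2" using b2 by blast
    moreover have "y2 - y1 \<le> h" using y12 h by auto
    ultimately have "\<bar>phi' y2 - phi' y1\<bar> \<le> h * M2"
      using eta y12 by (simp add: abs_mult mult_mono)
    moreover have "\<bar>phi' z - phi' xi\<bar> = \<bar>phi' y2 - phi' y1\<bar>"
      unfolding y1_def y2_def by (cases "z \<le> xi") auto
    ultimately show ?thesis by simp
  next
    case True
    have "M2 \<ge> 0" using b2 h by force
    then show ?thesis using True h by simp
  qed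
  ultimately show ?thesis by linarith
qed

lemma deriv_bound_interpolation:
  fixes phi phi' phi'' :: "real \<Rightarrow> real"
  assumes d1: "\<forall>t\<in>{a<..<b}. (phi has_real_derivative phi' t) (at t)"
    and d2: "\<forall>t\<in>{a<..<b}. (phi' has_real_derivative phi'' t) (at t)"
    and b0: "\<forall>t\<in>{a<..<b}. \<bar>phi t\<bar> \<le> M0" and b2: "\<forall>t\<in>{a<..<b}. \<bar>phi'' t\<bar> \<le> M2"
    and h: "h > 0" "b - a > 2 * h" and z: "z \<in> {a<..<b}"
  shows "\<bar>phi' z\<bar> \<le> 2 * M0 / h + h * M2"
proof -
  have key: "\<bar>phi' z\<bar> \<le> 2 * M0 / h + h * M2"
    if "hi - lo = h" "{lo..hi} \<subseteq> {a<..<b}" "z = lo \<or> z = hi" for lo hi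
    by (rule deriv_bound_interpolation_endpoint[where phi = phi and phi' = phi' and phi'' = phi'' and z = z])
      (use that h d1 d2 b0 b2 in blast)+
  consider "z + h < b" | "z - h > a" using h z by fastforce
  then show ?thesis
  proof cases
    case 1
    then show ?thesis using z h by (intro key[where lo = z and hi = "z + h"]) auto
  next
    case 2
    then show ?thesis using z h by (intro key[where lo = "z - h" and hi = z]) auto
  qed
qed

lemma supn_le: "(\<And>z. z \<in> I \<Longrightarrow> \<bar>f z\<bar> \<le> c) \<Longrightarrow> supn I f \<le> ereal c"
  unfolding supn_def by (intro SUP_least) auto

lemma supn_finite:
  assumes "z0 \<in> I" "\<forall>z\<in>I. \<bar>h z\<bar> \<le> M"
  shows "\<exists>r. supn I h = ereal r \<and> r \<ge> 0 \<and> (\<forall>z\<in>I. \<bar>h z\<bar> \<le> r)"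
proof -
  have up: "ereal \<bar>h z\<bar> \<le> supn I h" if "z \<in> I" for z unfolding supn_def using that by (rule SUP_upper)
  have "ereal 0 \<le> supn I h" using up[OF assms(1)] by (meson abs_ge_zero ereal_less_eq(3) order_trans)
  moreover have "supn I h \<le> ereal M" using supn_le assms(2) by metis
  ultimately obtain r where "supn I h = ereal r" by (cases "supn I h") auto
  then show ?thesis using up \<open>ereal 0 \<le> supn I h\<close> by auto
qed

section \<open>Energy estimates for the linearised system\<close>

text \<open>Coercivity holds only half by half: on the right half \<open>R\<close> is bounded below and \<open>u\<^sub>1\<close> is
  controlled by the Hardy inequality around the ground state \<open>g\<^sub>1\<close>; on the left half the two
  components swap roles.\<close>

locale ground_state_system =
  fixes L :: real and P K R g1 g2 g1' g2' :: "real \<Rightarrow> real" and gmin gmax rmin pmax cmax :: real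
  assumes L_pos: "L > 0"
  and cont_P: "continuous_on {-L..L} P" and cont_K: "continuous_on {-L..L} K"
  and cont_R: "continuous_on {-L..L} R"
  and g1_deriv: "\<And>x. (g1 has_real_derivative g1' x) (at x)"
  and g2_deriv: "\<And>x. (g2 has_real_derivative g2' x) (at x)"
  and g1'_deriv: "\<And>x. (g1' has_real_derivative (P x * g1 x - K x * g2 x)) (at x)"
  and g2'_deriv: "\<And>x. (g2' has_real_derivative (R x * g2 x - K x * g1 x)) (at x)"
  and g_pos: "\<And>x. x \<in> {-L..L} \<Longrightarrow> g1 x > 0 \<and> g2 x > 0"
  and coeff_bounds: "\<And>x. x \<in> {-L..L} \<Longrightarrow> 0 \<le> P x \<and> 0 \<le> R x \<and> 0 \<le> K x \<and> (K x)\<^sup>2 \<le> 4 * P x * R x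
              \<and> P x \<le> cmax \<and> R x \<le> cmax \<and> K x \<le> cmax"
  and right_half: "\<And>x. x \<in> {0..L} \<Longrightarrow> rmin \<le> R x \<and> P x \<le> pmax \<and> gmin \<le> g1 x \<and> g1 x \<le> gmax"
  and left_half: "\<And>x. x \<in> {-L..0} \<Longrightarrow> rmin \<le> P x \<and> R x \<le> pmax \<and> gmin \<le> g2 x \<and> g2 x \<le> gmax"
  and gmin_pos: "gmin > 0" and rmin_pos: "rmin > 0" and pmax_nonneg: "pmax \<ge> 0"
begin

lemma cmax_nonneg: "cmax \<ge> 0" using coeff_bounds[of 0] L_pos by auto

definition "hardy_const = 4 * gmax\<^sup>2 * L\<^sup>2 / gmin\<^sup>2"
definition "mass_const = 2 * hardy_const + 2 * (1 + 14 * pmax * hardy_const) / rmin"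

lemma hardy_const_nonneg: "hardy_const \<ge> 0" unfolding hardy_const_def by simp

lemma mass_const_pos: "mass_const > 0"
proof -
  have "pmax * hardy_const \<ge> 0" using hardy_const_nonneg pmax_nonneg by simp
  then have "2 * (1 + 14 * pmax * hardy_const) / rmin > 0"
    using rmin_pos by (intro divide_pos_pos) auto
  then show ?thesis unfolding mass_const_def using hardy_const_nonneg by linarith
qed

lemma cont_g: "continuous_on S g1" "continuous_on S g2" "continuous_on S g1'" "continuous_on S g2'"
  using g1_deriv g2_deriv g1'_deriv g2'_deriv
  by (meson DERIV_isCont continuous_at_imp_continuous_on)+

end

locale ground_state_solution = ground_state_system +
  fixes f1 f2 u1 u2 u1' u2' :: "real \<Rightarrow> real" and F :: real
  assumes sol: "odesys_sol (-L) L P K R f1 f2 u1 u2 u1' u2'"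
  and ends: "u1 (-L) = 0" "u1 L = 0" "u2 (-L) = 0" "u2 L = 0"
  and cont_f1: "continuous_on {-L..L} f1" and cont_f2: "continuous_on {-L..L} f2"
  and f_bound: "\<And>x. x \<in> {-L<..<L} \<Longrightarrow> \<bar>f1 x\<bar> \<le> F \<and> \<bar>f2 x\<bar> \<le> F"
begin

lemma cont_u: "continuous_on {-L..L} u1" "continuous_on {-L..L} u2"
  using sol unfolding odesys_sol_def by auto

definition "u1'' x = P x * u1 x - K x * u2 x - f1 x"
definition "u2'' x = R x * u2 x - K x * u1 x - f2 x"

lemma u_derivs: "x \<in> {-L<..<L} \<Longrightarrow> (u1 has_real_derivative u1' x) (at x) \<and> (u2 has_real_derivative u2' x) (at x) \<and>
   (u1' has_real_derivative u1'' x) (at x) \<and> (u2' has_real_derivative u2'' x) (at x)"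
  using sol unfolding odesys_sol_def u1''_def u2''_def by auto

lemma square_integrable:
  "{a..b} \<subseteq> {-L..L} \<Longrightarrow> (\<lambda>x. (u1 x)\<^sup>2) integrable_on {a..b}"
  "{a..b} \<subseteq> {-L..L} \<Longrightarrow> (\<lambda>x. (u2 x)\<^sup>2) integrable_on {a..b}"
  "(\<lambda>x. (u1 x)\<^sup>2 + (u2 x)\<^sup>2) integrable_on {-L..L}"
  using continuous_on_subset[OF cont_u(1)] continuous_on_subset[OF cont_u(2)] cont_u
  by (auto intro!: integrable_continuous_real continuous_intros)

definition "work = integral {-L..L} (\<lambda>x. u1 x * f1 x + u2 x * f2 x)"
definition "mass = integral {-L..L} (\<lambda>x. (u1 x)\<^sup>2 + (u2 x)\<^sup>2)"
definition "kinetic = integral {-L..L} (\<lambda>x. (u1' x)\<^sup>2 + (u2' x)\<^sup>2)"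

definition "energy_density x =
  (u1' x)\<^sup>2 + (u2' x)\<^sup>2 + P x * (u1 x)\<^sup>2 + R x * (u2 x)\<^sup>2 - 2 * K x * u1 x * u2 x"

lemma energy_density_has_integral: "(energy_density has_integral work) {-L..L}"
proof -
  have LL: "-L < L" using L_pos by simp
  have "((\<lambda>x. (u1' x)\<^sup>2 + u1 x * u1'' x) has_integral 0) {-L..L}"
    using cont_P cont_K cont_f1 cont_u u_derivs ends
    by (intro dirichlet_integration_by_parts[OF LL]) (auto simp: u1''_def intro!: continuous_intros)
  moreover have "((\<lambda>x. (u2' x)\<^sup>2 + u2 x * u2'' x) has_integral 0) {-L..L}"
    using cont_R cont_K cont_f2 cont_u u_derivs ends
    by (intro dirichlet_integration_by_parts[OF LL]) (auto simp: u2''_def intro!: continuous_intros)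
  moreover have "((\<lambda>x. u1 x * f1 x + u2 x * f2 x) has_integral work) {-L..L}"
    unfolding work_def using cont_u cont_f1 cont_f2
    by (intro integrable_integral integrable_continuous_real continuous_intros)
  ultimately have "((\<lambda>x. ((u1' x)\<^sup>2 + u1 x * u1'' x) + ((u2' x)\<^sup>2 + u2 x * u2'' x)
      + (u1 x * f1 x + u2 x * f2 x)) has_integral 0 + 0 + work) {-L..L}"
    by (intro has_integral_add)
  moreover have "energy_density = (\<lambda>x. ((u1' x)\<^sup>2 + u1 x * u1'' x) + ((u2' x)\<^sup>2 + u2 x * u2'' x)
      + (u1 x * f1 x + u2 x * f2 x))"
    unfolding energy_density_def u1''_def u2''_def by (simp add: fun_eq_iff power2_eq_square algebra_simps)
  ultimately show ?thesis by simp
qed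

definition "q1 x = g1' x / g1 x"
definition "q2 x = g2' x / g2 x"
definition "q1' x = ((P x * g1 x - K x * g2 x) * g1 x - g1' x * g1' x) / (g1 x * g1 x)"
definition "q2' x = ((R x * g2 x - K x * g1 x) * g2 x - g2' x * g2' x) / (g2 x * g2 x)"
definition "picone_remainder x = q1' x * (u1 x * u1 x) + (u1' x * u1 x + u1' x * u1 x) * q1 x
                   + (q2' x * (u2 x * u2 x) + (u2' x * u2 x + u2' x * u2 x) * q2 x)"
definition "picone_density x = (u1' x - q1 x * u1 x)\<^sup>2 + (u2' x - q2 x * u2 x)\<^sup>2
                 + K x * g1 x * g2 x * (u1 x / g1 x - u2 x / g2 x)\<^sup>2"

text \<open>The remainder is the derivative of \<open>q\<^sub>1 u\<^sub>1\<^sup>2 + q\<^sub>2 u\<^sub>2\<^sup>2\<close>, which vanishes at both ends.\<close>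

lemma picone_remainder_has_integral: "(picone_remainder has_integral 0) {-L..L}"
proof (rule has_integral_0_if_equal_ends[of _ _ "\<lambda>x. q1 x * (u1 x * u1 x) + q2 x * (u2 x * u2 x)"])
  have gnz: "\<forall>x\<in>{-L..L}. g1 x \<noteq> 0" "\<forall>x\<in>{-L..L}. g2 x \<noteq> 0" using g_pos by force+
  show "continuous_on {-L..L} (\<lambda>x. q1 x * (u1 x * u1 x) + q2 x * (u2 x * u2 x))"
    unfolding q1_def q2_def using cont_g cont_u gnz by (intro continuous_intros) auto
  show "\<forall>x\<in>{-L<..<L}. ((\<lambda>x. q1 x * (u1 x * u1 x) + q2 x * (u2 x * u2 x))
          has_real_derivative picone_remainder x) (at x)"
  proof
    fix x assume x: "x \<in> {-L<..<L}"
    have g: "g1 x \<noteq> 0" "g2 x \<noteq> 0" using g_pos[of x] x by auto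
    have "(q1 has_real_derivative q1' x) (at x)" "(q2 has_real_derivative q2' x) (at x)"
      unfolding q1_def q1'_def q2_def q2'_def
      using DERIV_divide[OF g1'_deriv g1_deriv g(1)] DERIV_divide[OF g2'_deriv g2_deriv g(2)] by auto
    then show "((\<lambda>x. q1 x * (u1 x * u1 x) + q2 x * (u2 x * u2 x)) has_real_derivative picone_remainder x) (at x)"
      unfolding picone_remainder_def using u_derivs[OF x] by (auto intro!: derivative_eq_intros)
  qed
qed (use L_pos ends in auto)

lemma energy_density_eq_picone:
  "x \<in> {-L..L} \<Longrightarrow> energy_density x = picone_density x + picone_remainder x"
  using g_pos[of x] picone_identity[of "g1 x" "g2 x" "u1' x" "u2' x" "P x" "u1 x" "R x" "u2 x" "K x" "g1' x" "g2' x"]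
  unfolding energy_density_def picone_density_def picone_remainder_def q1_def q2_def q1'_def q2'_def
  by simp

lemma picone_density_has_integral: "(picone_density has_integral work) {-L..L}"
proof -
  have "((\<lambda>x. energy_density x - picone_remainder x) has_integral work) {-L..L}"
    using has_integral_diff[OF energy_density_has_integral picone_remainder_has_integral] by simp
  moreover have "\<And>x. x \<in> {-L..L} \<Longrightarrow> energy_density x - picone_remainder x = picone_density x"
    using energy_density_eq_picone by simp
  ultimately show ?thesis
    by (intro has_integral_eq[of "{-L..L}" "\<lambda>x. energy_density x - picone_remainder x" picone_density work])
qed

lemma picone_density_nonneg: "x \<in> {-L..L} \<Longrightarrow> picone_density x \<ge> 0"
  using g_pos[of x] coeff_bounds[of x] unfolding picone_density_def
  by (intro add_nonneg_nonneg mult_nonneg_nonneg) auto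

lemma picone_density_halves_le:
  "integral {0..L} picone_density \<le> work" "integral {-L..0} picone_density \<le> work"
proof -
  have Ni: "picone_density integrable_on {-L..L}" using picone_density_has_integral by blast
  have "integral {-L..0} picone_density + integral {0..L} picone_density = work"
    using Henstock_Kurzweil_Integration.integral_combine[OF _ _ Ni, of 0] L_pos picone_density_has_integral
    by (simp add: integral_unique)
  moreover have "integral {-L..0} picone_density \<ge> 0" "integral {0..L} picone_density \<ge> 0"
    using L_pos picone_density_nonneg by (auto intro!: integral_nonneg integrable_subinterval_real[OF Ni])
  ultimately show "integral {0..L} picone_density \<le> work" "integral {-L..0} picone_density \<le> work"
    by linarith+
qed

lemma mass_right_u1_le: "integral {0..L} (\<lambda>x. (u1 x)\<^sup>2) \<le> hardy_const * work"
proof -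
  have "integral {0..L} (\<lambda>x. (u1 x)\<^sup>2) \<le> hardy_const * integral {0..L} picone_density"
    unfolding hardy_const_def
  proof (rule hardy_inequality_ground_state[where g = g1 and g' = g1' and u' = u1'])
    show "continuous_on {0..L} u1" using cont_u(1) by (rule continuous_on_subset) auto
    show "\<forall>x\<in>{0<..<L}. (u1' x - g1' x / g1 x * u1 x)\<^sup>2 \<le> picone_density x"
    proof
      fix x assume "x \<in> {0<..<L}"
      then have "0 \<le> (u2' x - q2 x * u2 x)\<^sup>2 + K x * g1 x * g2 x * (u1 x / g1 x - u2 x / g2 x)\<^sup>2"
        using g_pos[of x] coeff_bounds[of x] by (intro add_nonneg_nonneg mult_nonneg_nonneg) auto
      then show "(u1' x - g1' x / g1 x * u1 x)\<^sup>2 \<le> picone_density x" unfolding picone_density_def q1_def by simp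
    qed
    show "picone_density integrable_on {0..L}"
      using picone_density_has_integral L_pos by (auto intro: integrable_subinterval_real)
    show "\<forall>x\<in>{0<..<L}. x\<^sup>2 \<le> L\<^sup>2" by (auto intro: power_mono)
  qed (use L_pos right_half cont_g gmin_pos u_derivs g1_deriv ends in auto)
  also have "\<dots> \<le> hardy_const * work"
    using picone_density_halves_le(1) hardy_const_nonneg by (intro mult_left_mono) auto
  finally show ?thesis .
qed

lemma mass_left_u2_le: "integral {-L..0} (\<lambda>x. (u2 x)\<^sup>2) \<le> hardy_const * work"
proof -
  have "integral {-L..0} (\<lambda>x. (u2 x)\<^sup>2) \<le> hardy_const * integral {-L..0} picone_density"
    unfolding hardy_const_def
  proof (rule hardy_inequality_ground_state[where g = g2 and g' = g2' and u' = u2'])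
    show "continuous_on {-L..0} u2" using cont_u(2) by (rule continuous_on_subset) auto
    show "\<forall>x\<in>{-L<..<0}. (u2' x - g2' x / g2 x * u2 x)\<^sup>2 \<le> picone_density x"
    proof
      fix x assume "x \<in> {-L<..<0}"
      then have "0 \<le> (u1' x - q1 x * u1 x)\<^sup>2 + K x * g1 x * g2 x * (u1 x / g1 x - u2 x / g2 x)\<^sup>2"
        using g_pos[of x] coeff_bounds[of x] by (intro add_nonneg_nonneg mult_nonneg_nonneg) auto
      then show "(u2' x - g2' x / g2 x * u2 x)\<^sup>2 \<le> picone_density x" unfolding picone_density_def q2_def by simp
    qed
    show "picone_density integrable_on {-L..0}"
      using picone_density_has_integral L_pos by (auto intro: integrable_subinterval_real)
    show "\<forall>x\<in>{-L<..<0}. x\<^sup>2 \<le> L\<^sup>2"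
      by (auto simp: abs_le_square_iff[symmetric])
  qed (use L_pos left_half cont_g gmin_pos u_derivs g2_deriv ends in auto)
  also have "\<dots> \<le> hardy_const * work"
    using picone_density_halves_le(2) hardy_const_nonneg by (intro mult_left_mono) auto
  finally show ?thesis .
qed

lemma energy_density_right_ge:
  assumes "x \<in> {0<..<L}"
  shows "rmin / 2 * (u2 x)\<^sup>2 - 7 * pmax * (u1 x)\<^sup>2 \<le> energy_density x"
proof -
  have c: "(K x)\<^sup>2 \<le> 4 * P x * R x" "rmin \<le> R x" "P x \<le> pmax"
    using assms coeff_bounds[of x] right_half[of x] by auto
  then have "2 * K x * u1 x * u2 x \<le> R x * (u2 x)\<^sup>2 / 2 + 8 * P x * (u1 x)\<^sup>2"
    using rmin_pos by (intro coupling_term_le) auto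
  moreover have "rmin * (u2 x)\<^sup>2 \<le> R x * (u2 x)\<^sup>2" "P x * (u1 x)\<^sup>2 \<le> pmax * (u1 x)\<^sup>2"
    using c by (auto intro: mult_right_mono)
  ultimately show ?thesis unfolding energy_density_def
    using zero_le_power2[of "u1' x"] zero_le_power2[of "u2' x"] by linarith
qed

lemma energy_density_left_ge:
  assumes "x \<in> {-L<..<0}"
  shows "rmin / 2 * (u1 x)\<^sup>2 - 7 * pmax * (u2 x)\<^sup>2 \<le> energy_density x"
proof -
  have c: "(K x)\<^sup>2 \<le> 4 * R x * P x" "rmin \<le> P x" "R x \<le> pmax"
    using assms coeff_bounds[of x] left_half[of x] by (auto simp: mult_ac)
  then have "2 * K x * u2 x * u1 x \<le> P x * (u1 x)\<^sup>2 / 2 + 8 * R x * (u2 x)\<^sup>2"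
    using rmin_pos by (intro coupling_term_le) auto
  moreover have "rmin * (u1 x)\<^sup>2 \<le> P x * (u1 x)\<^sup>2" "R x * (u2 x)\<^sup>2 \<le> pmax * (u2 x)\<^sup>2"
    using c by (auto intro: mult_right_mono)
  moreover have "2 * K x * u2 x * u1 x = 2 * K x * u1 x * u2 x" by simp
  ultimately show ?thesis unfolding energy_density_def
    using zero_le_power2[of "u1' x"] zero_le_power2[of "u2' x"] by linarith
qed

lemma mass_eq_halves:
  "mass = integral {0..L} (\<lambda>x. (u1 x)\<^sup>2) + integral {-L..0} (\<lambda>x. (u1 x)\<^sup>2)
        + integral {-L..0} (\<lambda>x. (u2 x)\<^sup>2) + integral {0..L} (\<lambda>x. (u2 x)\<^sup>2)"
proof -
  have sub: "{0..L} \<subseteq> {-L..L}" "{-L..0} \<subseteq> {-L..L}" using L_pos by auto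
  have "mass = integral {-L..0} (\<lambda>x. (u1 x)\<^sup>2 + (u2 x)\<^sup>2) + integral {0..L} (\<lambda>x. (u1 x)\<^sup>2 + (u2 x)\<^sup>2)"
    unfolding mass_def
    using Henstock_Kurzweil_Integration.integral_combine[OF _ _ square_integrable(3), of 0] L_pos by simp
  then show ?thesis
    using square_integrable(1,2)[OF sub(1)] square_integrable(1,2)[OF sub(2)] by (simp add: integral_add)
qed

lemma mass_coercive_halves_le:
  "integral {-L..0} (\<lambda>x. (u1 x)\<^sup>2) + integral {0..L} (\<lambda>x. (u2 x)\<^sup>2)
     \<le> 2 * (1 + 14 * pmax * hardy_const) / rmin * work"
proof -
  have sub: "{0..L} \<subseteq> {-L..L}" "{-L..0} \<subseteq> {-L..L}" using L_pos by auto
  have Ei: "energy_density integrable_on {-L..L}" using energy_density_has_integral by blast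
  have "integral {0..L} (\<lambda>x. rmin / 2 * (u2 x)\<^sup>2 - 7 * pmax * (u1 x)\<^sup>2) \<le> integral {0..L} energy_density"
    using square_integrable(1,2)[OF sub(1)] energy_density_right_ge integrable_subinterval_real[OF Ei sub(1)]
    by (intro integral_le_on_interior) (auto intro!: integrable_diff integrable_on_mult_right)
  moreover have "integral {-L..0} (\<lambda>x. rmin / 2 * (u1 x)\<^sup>2 - 7 * pmax * (u2 x)\<^sup>2) \<le> integral {-L..0} energy_density"
    using square_integrable(1,2)[OF sub(2)] energy_density_left_ge integrable_subinterval_real[OF Ei sub(2)]
    by (intro integral_le_on_interior) (auto intro!: integrable_diff integrable_on_mult_right)
  moreover have "integral {-L..0} energy_density + integral {0..L} energy_density = work"
    using Henstock_Kurzweil_Integration.integral_combine[OF _ _ Ei, of 0] L_pos energy_density_has_integral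
    by (simp add: integral_unique)
  ultimately have "rmin / 2 * (integral {-L..0} (\<lambda>x. (u1 x)\<^sup>2) + integral {0..L} (\<lambda>x. (u2 x)\<^sup>2))
      \<le> work + 7 * pmax * (integral {0..L} (\<lambda>x. (u1 x)\<^sup>2) + integral {-L..0} (\<lambda>x. (u2 x)\<^sup>2))"
    using square_integrable(1,2)[OF sub(1)] square_integrable(1,2)[OF sub(2)]
    by (simp add: integral_diff integrable_on_mult_right algebra_simps)
  also have "\<dots> \<le> work + 7 * pmax * (2 * hardy_const * work)"
    using mass_right_u1_le mass_left_u2_le pmax_nonneg by (intro add_left_mono mult_left_mono) auto
  finally show ?thesis using rmin_pos by (simp add: field_simps)
qed

lemma mass_le: "mass \<le> mass_const * work"
  using mass_eq_halves mass_coercive_halves_le mass_right_u1_le mass_left_u2_le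
  unfolding mass_const_def by (simp add: algebra_simps)

lemma work_le: "work \<le> 4 * mass_const * L * F\<^sup>2"
proof -
  define e where "e = 1 / (2 * mass_const)"
  have e0: "e > 0" unfolding e_def using mass_const_pos by simp
  have "work \<le> integral {-L..L} (\<lambda>x. e * ((u1 x)\<^sup>2 + (u2 x)\<^sup>2) + F\<^sup>2 / (2 * e))"
    unfolding work_def
  proof (rule integral_le_on_interior)
    show "(\<lambda>x. u1 x * f1 x + u2 x * f2 x) integrable_on {-L..L}"
      using cont_u cont_f1 cont_f2 by (intro integrable_continuous_real continuous_intros)
    show "(\<lambda>x. e * ((u1 x)\<^sup>2 + (u2 x)\<^sup>2) + F\<^sup>2 / (2 * e)) integrable_on {-L..L}"
      by (rule integrable_add[OF integrable_on_mult_right[OF square_integrable(3)] integrable_const_ivl])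
    show "\<forall>x\<in>{-L<..<L}. u1 x * f1 x + u2 x * f2 x \<le> e * ((u1 x)\<^sup>2 + (u2 x)\<^sup>2) + F\<^sup>2 / (2 * e)"
    proof
      fix x assume "x \<in> {-L<..<L}"
      then have "u1 x * f1 x \<le> e * (u1 x)\<^sup>2 + F\<^sup>2 / (4 * e)" "u2 x * f2 x \<le> e * (u2 x)\<^sup>2 + F\<^sup>2 / (4 * e)"
        using f_bound[of x] by (auto intro: mult_le_eps_square[OF e0])
      moreover have "F\<^sup>2 / (4 * e) + F\<^sup>2 / (4 * e) = F\<^sup>2 / (2 * e)" by (simp add: field_simps)
      ultimately show "u1 x * f1 x + u2 x * f2 x \<le> e * ((u1 x)\<^sup>2 + (u2 x)\<^sup>2) + F\<^sup>2 / (2 * e)"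
        by (simp add: algebra_simps)
    qed
  qed
  also have "\<dots> = integral {-L..L} (\<lambda>x. e * ((u1 x)\<^sup>2 + (u2 x)\<^sup>2)) + integral {-L..L} (\<lambda>x. F\<^sup>2 / (2 * e))"
    by (rule integral_add[OF integrable_on_mult_right[OF square_integrable(3)] integrable_const_ivl])
  also have "\<dots> = e * mass + 2 * L * (F\<^sup>2 / (2 * e))"
    using L_pos unfolding mass_def by (simp add: content_real)
  also have "\<dots> = mass / (2 * mass_const) + 2 * L * mass_const * F\<^sup>2"
    unfolding e_def using mass_const_pos by (simp add: field_simps)
  also have "\<dots> \<le> work / 2 + 2 * L * mass_const * F\<^sup>2"
  proof -
    have "mass / (2 * mass_const) \<le> mass_const * work / (2 * mass_const)"
      using mass_le mass_const_pos by (intro divide_right_mono) auto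
    then show ?thesis using mass_const_pos by simp
  qed
  finally show ?thesis by (simp add: algebra_simps)
qed

lemma kinetic_integrable: "(\<lambda>x. (u1' x)\<^sup>2 + (u2' x)\<^sup>2) integrable_on {-L..L}"
  and kinetic_le: "kinetic \<le> work + cmax * mass"
proof -
  define Q where "Q x = P x * (u1 x)\<^sup>2 + R x * (u2 x)\<^sup>2 - 2 * K x * u1 x * u2 x" for x
  have Qi: "Q integrable_on {-L..L}"
    unfolding Q_def using cont_P cont_K cont_R cont_u by (intro integrable_continuous_real continuous_intros)
  have eq: "(\<lambda>x. (u1' x)\<^sup>2 + (u2' x)\<^sup>2) = (\<lambda>x. energy_density x - Q x)"
    unfolding energy_density_def Q_def by (rule ext) simp
  show "(\<lambda>x. (u1' x)\<^sup>2 + (u2' x)\<^sup>2) integrable_on {-L..L}"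
    unfolding eq using energy_density_has_integral Qi by (blast intro: integrable_diff)
  have "- Q x \<le> cmax * ((u1 x)\<^sup>2 + (u2 x)\<^sup>2)" if "x \<in> {-L..L}" for x
  proof -
    have c: "0 \<le> P x" "0 \<le> R x" "0 \<le> K x" "K x \<le> cmax" using coeff_bounds[OF that] by auto
    have "2 * (u1 x * u2 x) \<le> (u1 x)\<^sup>2 + (u2 x)\<^sup>2"
      using sum_squares_ge_zero[of "u1 x - u2 x" 0] by (simp add: power2_eq_square algebra_simps)
    then have "K x * (2 * (u1 x * u2 x)) \<le> cmax * ((u1 x)\<^sup>2 + (u2 x)\<^sup>2)"
      using c by (meson mult_left_mono mult_right_mono order_trans zero_le_power2 add_nonneg_nonneg)
    moreover have "0 \<le> P x * (u1 x)\<^sup>2" "0 \<le> R x * (u2 x)\<^sup>2" using c by auto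
    ultimately show ?thesis unfolding Q_def by (simp add: algebra_simps)
  qed
  then have "integral {-L..L} (\<lambda>x. - Q x) \<le> integral {-L..L} (\<lambda>x. cmax * ((u1 x)\<^sup>2 + (u2 x)\<^sup>2))"
    using Qi square_integrable(3) by (intro integral_le) (auto intro: integrable_neg integrable_on_mult_right)
  moreover have "kinetic = work - integral {-L..L} Q"
    unfolding kinetic_def eq using energy_density_has_integral Qi
    by (simp add: integral_diff has_integral_integrable integral_unique)
  ultimately show "kinetic \<le> work + cmax * mass"
    unfolding mass_def using Qi by (simp add: integral_neg)
qed

lemma square_le_mass_kinetic:
  assumes d: "d > 0" and x: "x \<in> {-L..L}"
  shows "(u1 x)\<^sup>2 \<le> d * mass + kinetic / d \<and> (u2 x)\<^sup>2 \<le> d * mass + kinetic / d"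
proof -
  define G where "G t = d * ((u1 t)\<^sup>2 + (u2 t)\<^sup>2) + ((u1' t)\<^sup>2 + (u2' t)\<^sup>2) / d" for t
  have Gi: "G integrable_on {-L..L}" and "integral {-L..L} G = d * mass + kinetic / d"
    using integral_add[OF integrable_on_mult_right[OF square_integrable(3)] integrable_on_divide[OF kinetic_integrable]]
      integrable_add[OF integrable_on_mult_right[OF square_integrable(3)] integrable_on_divide[OF kinetic_integrable]]
    unfolding G_def mass_def kinetic_def by auto
  moreover have "d * (u1 t)\<^sup>2 + (u1' t)\<^sup>2 / d \<le> G t" "d * (u2 t)\<^sup>2 + (u2' t)\<^sup>2 / d \<le> G t" "0 \<le> G t" for t
    unfolding G_def using d by (simp_all add: algebra_simps add_divide_distrib)
  ultimately show ?thesis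
    using square_le_integral_of_zero_end[of "-L" x L d u1 u1' G] square_le_integral_of_zero_end[of "-L" x L d u2 u2' G]
      x d cont_u ends u_derivs by auto
qed

lemma energy_estimate:
  assumes "d > 0" "x \<in> {-L..L}"
  defines "W \<equiv> 4 * mass_const * L * F\<^sup>2"
  shows "(u1 x)\<^sup>2 \<le> d * (mass_const * W) + (W + cmax * (mass_const * W)) / d
       \<and> (u2 x)\<^sup>2 \<le> d * (mass_const * W) + (W + cmax * (mass_const * W)) / d"
proof -
  have "mass \<le> mass_const * W"
    using mass_le work_le mass_const_pos unfolding W_def by (smt (verit) mult_left_mono)
  moreover have "kinetic \<le> W + cmax * (mass_const * W)"
    using kinetic_le work_le \<open>mass \<le> mass_const * W\<close> cmax_nonneg unfolding W_def
    by (smt (verit) mult_left_mono)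
  ultimately have "d * mass + kinetic / d \<le> d * (mass_const * W) + (W + cmax * (mass_const * W)) / d"
    using assms(1) by (intro add_mono mult_left_mono divide_right_mono) auto
  then show ?thesis using square_le_mass_kinetic[OF assms(1,2)] by linarith
qed

end

section \<open>The Dirichlet problem for the linearised system\<close>

lemma singular_2x2_kernel:
  fixes a b c d :: real
  assumes "a * d - b * c = 0"
  obtains k1 k2 where "(k1, k2) \<noteq> (0, 0)" "k1 * a + k2 * b = 0" "k1 * c + k2 * d = 0"
proof (cases "d = 0 \<and> c = 0")
  case False
  then show ?thesis using that[of d "- c"] assms by (auto simp: algebra_simps)
next
  case True
  then show ?thesis using that[of 1 0] that[of b "- a"] by (cases "a = 0 \<and> b = 0") auto
qed

context ground_state_system
begin

lemma homogeneous_solution_zero: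
  assumes "odesys_sol (-L) L P K R (\<lambda>x. 0) (\<lambda>x. 0) w1 w2 w1' w2'"
    and "w1 (-L) = 0" "w1 L = 0" "w2 (-L) = 0" "w2 L = 0"
    and x: "x \<in> {-L..L}"
  shows "w1 x = 0 \<and> w2 x = 0"
proof -
  interpret ground_state_solution L P K R g1 g2 g1' g2' gmin gmax rmin pmax cmax
    "\<lambda>x. 0" "\<lambda>x. 0" w1 w2 w1' w2' 0
    by unfold_locales (use assms in auto)
  have "(w1 x)\<^sup>2 \<le> 0 \<and> (w2 x)\<^sup>2 \<le> 0" using energy_estimate[of 1 x] x by simp
  then show ?thesis by simp
qed

lemma homogeneous_solution_slope_zero:
  assumes sol: "odesys_sol (-L) L P K R (\<lambda>x. 0) (\<lambda>x. 0) w1 w2 z1 z2"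
    and ends: "w1 (-L) = 0" "w1 L = 0" "w2 (-L) = 0" "w2 L = 0"
    and cz: "continuous_on {-L..L} z1" "continuous_on {-L..L} z2"
  shows "z1 (-L) = 0 \<and> z2 (-L) = 0"
proof -
  have "z1 x = 0 \<and> z2 x = 0" if x: "x \<in> {-L<..<L}" for x
  proof -
    have d: "(w1 has_real_derivative z1 x) (at x)" "(w2 has_real_derivative z2 x) (at x)"
      using sol x unfolding odesys_sol_def by auto
    have w0: "w1 y = 0" "w2 y = 0" if "y \<in> {-L<..<L}" for y
      using homogeneous_solution_zero[OF sol ends, of y] that by auto
    have "((\<lambda>x. 0) has_real_derivative z1 x) (at x)"
      by (rule has_field_derivative_transform_within_open[OF d(1), of "{-L<..<L}"]) (use x w0 in auto)
    moreover have "((\<lambda>x. 0) has_real_derivative z2 x) (at x)"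
      by (rule has_field_derivative_transform_within_open[OF d(2), of "{-L<..<L}"]) (use x w0 in auto)
    ultimately show ?thesis using DERIV_const DERIV_unique by blast
  qed
  moreover have "continuous_on (closure {-L<..<L}) z1" "continuous_on (closure {-L<..<L}) z2"
    "-L \<in> closure {-L<..<L}" using cz L_pos by auto
  ultimately show ?thesis using continuous_constant_on_closure by metis
qed

text \<open>Shooting from \<open>-L\<close>: the two homogeneous solutions with initial slopes \<open>(1, 0)\<close> and \<open>(0, 1)\<close>
  have independent values at \<open>L\<close>, since otherwise a nontrivial combination would solve the
  homogeneous Dirichlet problem.\<close>

lemma shooting_det_nonzero:
  assumes Y1: "odesys_sol (-L) L P K R (\<lambda>x. 0) (\<lambda>x. 0) a1 a2 b1 b2" "a1 (-L) = 0" "a2 (-L) = 0"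
     "continuous_on {-L..L} b1" "continuous_on {-L..L} b2" "b1 (-L) = 1" "b2 (-L) = 0"
    and Y2: "odesys_sol (-L) L P K R (\<lambda>x. 0) (\<lambda>x. 0) c1 c2 e1 e2" "c1 (-L) = 0" "c2 (-L) = 0"
     "continuous_on {-L..L} e1" "continuous_on {-L..L} e2" "e1 (-L) = 0" "e2 (-L) = 1"
  shows "a1 L * c2 L - c1 L * a2 L \<noteq> 0"
proof
  assume "a1 L * c2 L - c1 L * a2 L = 0"
  then obtain k1 k2 where k: "(k1, k2) \<noteq> (0, 0)" "k1 * a1 L + k2 * c1 L = 0" "k1 * a2 L + k2 * c2 L = 0"
    by (rule singular_2x2_kernel)
  have "odesys_sol (-L) L P K R (\<lambda>x. 0) (\<lambda>x. 0) (\<lambda>x. k1 * a1 x + k2 * c1 x) (\<lambda>x. k1 * a2 x + k2 * c2 x)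
      (\<lambda>x. k1 * b1 x + k2 * e1 x) (\<lambda>x. k1 * b2 x + k2 * e2 x)"
    using odesys_sol_lincomb[OF Y1(1) Y2(1), of k1 k2] by simp
  then have "k1 * b1 (-L) + k2 * e1 (-L) = 0 \<and> k1 * b2 (-L) + k2 * e2 (-L) = 0"
    by (rule homogeneous_solution_slope_zero) (use Y1 Y2 k in \<open>auto intro!: continuous_intros\<close>)
  then show False using Y1 Y2 k by simp
qed

lemma bvp_solvable:
  assumes cf1: "continuous_on {-L..L} f1" and cf2: "continuous_on {-L..L} f2"
  shows "\<exists>u1 u2 v1 v2. odesys_sol (-L) L P K R f1 f2 u1 u2 v1 v2 \<and>
            u1 (-L) = 0 \<and> u1 L = 0 \<and> u2 (-L) = 0 \<and> u2 L = 0"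
proof -
  have LL: "-L < L" using L_pos by simp
  note ivp = odesys_ivp_solvable[OF LL cont_P cont_K cont_R]
  obtain U1 U2 V1 V2 where U: "odesys_sol (-L) L P K R f1 f2 U1 U2 V1 V2" "U1 (-L) = 0" "U2 (-L) = 0"
    using ivp[OF cf1 cf2, of 0 0] by blast
  obtain a1 a2 b1 b2 where Y1: "odesys_sol (-L) L P K R (\<lambda>x. 0) (\<lambda>x. 0) a1 a2 b1 b2" "a1 (-L) = 0" "a2 (-L) = 0"
     "continuous_on {-L..L} b1" "continuous_on {-L..L} b2" "b1 (-L) = 1" "b2 (-L) = 0"
    using ivp[of "\<lambda>x. 0" "\<lambda>x. 0" 1 0] by auto
  obtain c1 c2 e1 e2 where Y2: "odesys_sol (-L) L P K R (\<lambda>x. 0) (\<lambda>x. 0) c1 c2 e1 e2" "c1 (-L) = 0" "c2 (-L) = 0"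
     "continuous_on {-L..L} e1" "continuous_on {-L..L} e2" "e1 (-L) = 0" "e2 (-L) = 1"
    using ivp[of "\<lambda>x. 0" "\<lambda>x. 0" 0 1] by auto
  define dt where "dt = a1 L * c2 L - c1 L * a2 L"
  have dt: "dt \<noteq> 0" unfolding dt_def by (rule shooting_det_nonzero[OF Y1 Y2])
  define d1 where "d1 = - (c2 L * U1 L - c1 L * U2 L) / dt"
  define d2 where "d2 = - (a1 L * U2 L - a2 L * U1 L) / dt"
  have "odesys_sol (-L) L P K R f1 f2 (\<lambda>x. U1 x + d1 * a1 x) (\<lambda>x. U2 x + d1 * a2 x)
      (\<lambda>x. V1 x + d1 * b1 x) (\<lambda>x. V2 x + d1 * b2 x)"
    using odesys_sol_lincomb[OF U(1) Y1(1), of 1 d1] by simp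
  then have "odesys_sol (-L) L P K R f1 f2 (\<lambda>x. U1 x + d1 * a1 x + d2 * c1 x) (\<lambda>x. U2 x + d1 * a2 x + d2 * c2 x)
      (\<lambda>x. V1 x + d1 * b1 x + d2 * e1 x) (\<lambda>x. V2 x + d1 * b2 x + d2 * e2 x)"
    using odesys_sol_lincomb[OF _ Y2(1), of _ _ _ _ _ _ 1 d2] by simp
  moreover have "U1 L + d1 * a1 L + d2 * c1 L = 0" "U2 L + d1 * a2 L + d2 * c2 L = 0"
    unfolding d1_def d2_def using dt unfolding dt_def by (simp_all add: field_simps; simp add: algebra_simps)+
  ultimately show ?thesis using U Y1 Y2 by fastforce
qed

end

section \<open>Properties of the pair \<open>(V\<^sub>1, V\<^sub>2)\<close>\<close>

locale V_pair =
  fixes V1 V2 :: "real \<Rightarrow> real"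
  assumes V_pair: "is_V_pair V1 V2"
begin

lemma V_pos: "V1 x > 0" "V2 x > 0"
  using V_pair unfolding is_V_pair_def by auto

lemma V_symm: "V1 (-x) = V2 x"
  using V_pair unfolding is_V_pair_def by auto

lemma V_deriv: "(V1 has_real_derivative deriv V1 x) (at x)" "(V2 has_real_derivative deriv V2 x) (at x)"
  using V_pair unfolding is_V_pair_def by (auto simp: DERIV_deriv_iff_real_differentiable)

lemma V_deriv2:
  "(deriv V1 has_real_derivative (V2 x)\<^sup>2 * V1 x) (at x)"
  "(deriv V2 has_real_derivative (V1 x)\<^sup>2 * V2 x) (at x)"
  using V_pair unfolding is_V_pair_def by (metis DERIV_deriv_iff_real_differentiable)+

lemma V_lim: "((\<lambda>x. V1 x / x) \<longlongrightarrow> 1 / sqrt 2) at_top" "(V2 \<longlongrightarrow> 0) at_top"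
  using V_pair unfolding is_V_pair_def by auto

lemma V1'_strict_mono: "a < b \<Longrightarrow> deriv V1 a < deriv V1 b"
  using DERIV_pos_imp_increasing[of a b "deriv V1"] V_deriv2(1) V_pos by (meson mult_pos_pos zero_less_power)

lemma V1'_mono: "a \<le> b \<Longrightarrow> deriv V1 a \<le> deriv V1 b"
  using V1'_strict_mono by (cases "a = b") (auto simp: less_eq_real_def)

text \<open>If \<open>V\<^sub>1'(x) \<le> 0\<close>, strict convexity makes \<open>V\<^sub>1' < 0\<close> on \<open>]-\<infinity>, x[\<close>, so \<open>V\<^sub>1\<close> grows linearly at
  \<open>-\<infinity>\<close>, whereas \<open>V\<^sub>1(-t) = V\<^sub>2(t) \<rightarrow> 0\<close>.\<close>

lemma V1'_pos: "deriv V1 x > 0"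
proof (rule ccontr)
  assume "\<not> deriv V1 x > 0"
  define x1 where "x1 = x - 1"
  define d where "d = - deriv V1 x1"
  have d: "d > 0" using V1'_strict_mono[of x1 x] \<open>\<not> deriv V1 x > 0\<close> unfolding d_def x1_def by auto
  have grow: "V1 y \<ge> d * (x1 - y)" if "y < x1" for y
  proof -
    obtain z where z: "y < z" "z < x1" "V1 x1 - V1 y = (x1 - y) * deriv V1 z"
      using MVT2[of y x1 V1 "deriv V1"] V_deriv(1) \<open>y < x1\<close> by blast
    have "deriv V1 z \<le> - d" using V1'_strict_mono[OF z(2)] unfolding d_def by linarith
    then have "(x1 - y) * deriv V1 z \<le> (x1 - y) * (- d)" using \<open>y < x1\<close> by (intro mult_left_mono) auto
    then have "V1 x1 - V1 y \<le> (x1 - y) * (- d)" using z(3) by simp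
    then show ?thesis using V_pos(1)[of x1] by (simp add: algebra_simps)
  qed
  have "\<forall>\<^sub>F t in at_top. V2 t < 1" using order_tendstoD(2)[OF V_lim(2)] by simp
  then obtain N where N: "\<And>t. t \<ge> N \<Longrightarrow> V2 t < 1" by (auto simp: eventually_at_top_linorder)
  define y where "y = min (x1 - 1 - 1/d) (- \<bar>N\<bar>)"
  have "y \<le> x1 - 1 - 1/d" unfolding y_def by simp
  moreover have "1 / d > 0" using d by simp
  ultimately have "y < x1" "y \<le> x1 - 1 - 1/d" by linarith+
  then have "V1 y \<ge> d * (1 + 1/d)" using grow[of y] d by (smt (verit) mult_left_mono)
  moreover have "d * (1 + 1/d) > 1" using d by (simp add: field_simps)
  moreover have "-y \<ge> N" unfolding y_def by arith
  then have "V1 y < 1" using N[of "-y"] V_symm[of "-y"] by simp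
  ultimately show False by linarith
qed

lemma V2'_eq: "deriv V2 x = - deriv V1 (-x)"
proof -
  have "((\<lambda>x. V1 (-x)) has_real_derivative deriv V1 (-x) * (-1)) (at x)"
    using DERIV_chain2[OF V_deriv(1)[of "-x"] DERIV_minus[OF DERIV_ident]] by simp
  then have "(V2 has_real_derivative - deriv V1 (-x)) (at x)" using V_symm by simp
  then show ?thesis using DERIV_unique[OF V_deriv(2)] by blast
qed

text \<open>Convexity: a slope larger than \<open>1 / sqrt 2\<close> at one point would persist and contradict
  \<open>V\<^sub>1(y) / y \<rightarrow> 1 / sqrt 2\<close>.\<close>

lemma V1'_le_one: "deriv V1 x \<le> 1"
proof -
  define c where "c = deriv V1 x"
  have lower: "V1 y \<ge> V1 x + c * (y - x)" if "y > x" for y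
  proof -
    obtain z where z: "x < z" "z < y" "V1 y - V1 x = (y - x) * deriv V1 z"
      using MVT2[of x y V1 "deriv V1"] V_deriv(1) \<open>y > x\<close> by blast
    have "(y - x) * c \<le> (y - x) * deriv V1 z"
      using V1'_mono[of x z] z unfolding c_def by (intro mult_left_mono) auto
    then show ?thesis using z by (simp add: algebra_simps)
  qed
  have "\<forall>\<^sub>F y in at_top. (V1 x + c * (y - x)) / y \<le> V1 y / y"
    by (rule eventually_mono[OF eventually_gt_at_top[of "max x 0"]]) (auto intro: divide_right_mono lower)
  moreover have "((\<lambda>y. (V1 x + c * (y - x)) / y) \<longlongrightarrow> c) at_top" by real_asymp
  ultimately have "c \<le> 1 / sqrt 2"
    using V_lim(1) by (auto intro: tendsto_le[OF trivial_limit_at_top_linorder])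
  also have "1 / sqrt 2 \<le> (1::real)" by (simp add: divide_le_eq)
  finally show ?thesis unfolding c_def .
qed

lemma V1_mono: "a \<le> b \<Longrightarrow> V1 a \<le> V1 b"
  using DERIV_nonneg_imp_nondecreasing[of a b V1] V_deriv(1) V1'_pos less_imp_le by blast

lemma V2_antimono: "a \<le> b \<Longrightarrow> V2 b \<le> V2 a"
  using V1_mono[of "-b" "-a"] V_symm by simp

lemma V1_le: "V1 x \<le> V1 0 + \<bar>x\<bar>"
proof (cases "x > 0")
  case True
  then obtain z where "V1 x - V1 0 = x * deriv V1 z"
    using MVT2[of 0 x V1 "deriv V1"] V_deriv(1) by force
  moreover have "x * deriv V1 z \<le> x" using V1'_le_one[of z] True by (simp add: mult_left_le)
  ultimately have "V1 x \<le> V1 0 + x" by linarith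
  then show ?thesis using True by simp
qed (use V1_mono[of x 0] in simp)

lemma V2_le: "V2 x \<le> V1 0 + \<bar>x\<bar>"
  using V1_le[of "-x"] V_symm by simp

end

section \<open>The scaled problem\<close>

text \<open>The constants of the estimate as functions of \<open>V\<^sub>1(0)\<close>, \<open>V\<^sub>1'(0)\<close> and \<open>T = ln \<Lambda>\<close>: in units
  of \<open>\<parallel>h\<parallel>\<^sub>\<infinity>\<close>, \<open>\<Lambda>\<^sup>-\<^sup>1\<^sup>/\<^sup>2 sup_coeff\<close> bounds \<open>sup |p|\<close> and \<open>deriv2_coeff\<close> bounds \<open>sup |p''|\<close>. All are
  polynomial in \<open>T\<close>.\<close>

definition mass_coeff :: "real \<Rightarrow> real \<Rightarrow> real \<Rightarrow> real" where
  "mass_coeff v m T = 120 * T\<^sup>2 / m\<^sup>2 + 2 / v\<^sup>2"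

definition sup_coeff :: "real \<Rightarrow> real \<Rightarrow> real \<Rightarrow> real" where
  "sup_coeff v m T = 1 + 4 * (mass_coeff v m T)\<^sup>2 * T + 4 * mass_coeff v m T * T
     + 8 * (v + T)\<^sup>2 * (mass_coeff v m T)\<^sup>2 * T"

definition deriv2_coeff :: "real \<Rightarrow> real \<Rightarrow> real \<Rightarrow> real" where
  "deriv2_coeff v m T = 4 * (v + T)\<^sup>2 * sup_coeff v m T + 1"

definition total_coeff :: "real \<Rightarrow> real \<Rightarrow> real \<Rightarrow> real" where
  "total_coeff v m T = 6 * sup_coeff v m T + 2 * deriv2_coeff v m T"

lemma total_coeff_ln_small:
  fixes v m a :: real
  assumes "v > 0" "m > 0" "a > 0"
  shows "((\<lambda>x. total_coeff v m (ln x) / x powr a) \<longlongrightarrow> 0) at_top"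
  using assms unfolding total_coeff_def deriv2_coeff_def sup_coeff_def mass_coeff_def by real_asymp

text \<open>Scaling \<open>x = \<Lambda>\<^sup>1\<^sup>/\<^sup>4 z\<close>: the coefficients of the boundary value problem are those of the
  linearisation about \<open>(V\<^sub>1, V\<^sub>2)\<close>, and \<open>(V\<^sub>1', -V\<^sub>2')\<close> solves the homogeneous linearised system.\<close>

locale scaled_V_pair = V_pair +
  fixes Lam :: real
  assumes Lam_ge: "Lam \<ge> exp 2"
begin

definition "s = Lam powr (1/4)"
definition "T = ln Lam"
definition "L = halfwidth Lam"
definition "coefP z = sqrt Lam * (V2 (s * z))\<^sup>2" for z
definition "coefR z = sqrt Lam * (V1 (s * z))\<^sup>2" for z
definition "coefK z = 2 * sqrt Lam * V1 (s * z) * V2 (s * z)" for z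
definition "slope1 z = deriv V1 (s * z)" for z
definition "slope2 z = - deriv V2 (s * z)" for z
definition "slope1' z = s * ((V2 (s * z))\<^sup>2 * V1 (s * z))" for z
definition "slope2' z = - (s * ((V1 (s * z))\<^sup>2 * V2 (s * z)))" for z
definition "coerc = sqrt Lam * (V1 0)\<^sup>2"
definition "cbound = 2 * sqrt Lam * (V1 0 + T)\<^sup>2"

lemma Lam_pos: "Lam > 0"
  using Lam_ge by (meson exp_gt_zero less_le_trans)

lemma T_ge_2: "T \<ge> 2"
  unfolding T_def using Lam_ge Lam_pos by (metis exp_gt_zero ln_exp ln_le_cancel_iff)

lemma s_pos: "s > 0" unfolding s_def using Lam_pos by simp

lemma s_square: "s * s = sqrt Lam"
  unfolding s_def using Lam_pos by (simp add: powr_add[symmetric] powr_half_sqrt)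

lemma Lam_powr_minus_quarter: "Lam powr (-1/4) = 1 / s"
  unfolding s_def using Lam_pos by (simp add: powr_minus_divide)

lemma L_eq: "L = T / s" unfolding L_def halfwidth_def T_def using Lam_powr_minus_quarter by simp

lemma L_pos: "L > 0" using L_eq T_ge_2 s_pos by simp

lemma scaled_abs_le: "z \<in> {-L..L} \<Longrightarrow> \<bar>s * z\<bar> \<le> T"
  using s_pos L_eq by (auto simp: abs_mult field_simps abs_le_iff)

lemma scaled_V_deriv:
  "((\<lambda>z. V1 (s * z)) has_real_derivative deriv V1 (s * z) * s) (at z)"
  "((\<lambda>z. V2 (s * z)) has_real_derivative deriv V2 (s * z) * s) (at z)"
  using DERIV_chain2[OF V_deriv(1)[of "s * z"] DERIV_cmult[OF DERIV_ident, of s]]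
    DERIV_chain2[OF V_deriv(2)[of "s * z"] DERIV_cmult[OF DERIV_ident, of s]] by simp_all

lemma slope_derivs:
  "(slope1 has_real_derivative slope1' z) (at z)"
  "(slope2 has_real_derivative slope2' z) (at z)"
  "(slope1' has_real_derivative (coefP z * slope1 z - coefK z * slope2 z)) (at z)"
  "(slope2' has_real_derivative (coefR z * slope2 z - coefK z * slope1 z)) (at z)"
proof -
  show "(slope1 has_real_derivative slope1' z) (at z)" "(slope2 has_real_derivative slope2' z) (at z)"
    unfolding slope1_def slope1'_def slope2_def slope2'_def
    using DERIV_chain2[OF V_deriv2(1)[of "s * z"] DERIV_cmult[OF DERIV_ident, of s]]
      DERIV_minus[OF DERIV_chain2[OF V_deriv2(2)[of "s * z"] DERIV_cmult[OF DERIV_ident, of s]]]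
    by (simp_all add: mult.commute)
  show "(slope1' has_real_derivative (coefP z * slope1 z - coefK z * slope2 z)) (at z)"
    unfolding slope1'_def
    by (rule derivative_eq_intros scaled_V_deriv refl | simp)+
      (simp add: coefP_def coefK_def slope1_def slope2_def s_square[symmetric] algebra_simps power2_eq_square)
  show "(slope2' has_real_derivative (coefR z * slope2 z - coefK z * slope1 z)) (at z)"
    unfolding slope2'_def
    by (rule derivative_eq_intros scaled_V_deriv refl | simp)+
      (simp add: coefR_def coefK_def slope1_def slope2_def s_square[symmetric] algebra_simps power2_eq_square)
qed

lemma coef_bounds:
  assumes "x \<in> {-L..L}"
  shows "0 \<le> coefP x \<and> 0 \<le> coefR x \<and> 0 \<le> coefK x \<and> (coefK x)\<^sup>2 \<le> 4 * coefP x * coefR x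
    \<and> coefP x \<le> cbound \<and> coefR x \<le> cbound \<and> coefK x \<le> cbound"
proof -
  define M where "M = (V1 0 + T)\<^sup>2"
  have V: "0 < V1 (s * x)" "0 < V2 (s * x)" "V1 (s * x) \<le> V1 0 + T" "V2 (s * x) \<le> V1 0 + T"
    using V_pos V1_le[of "s * x"] V2_le[of "s * x"] scaled_abs_le[OF assms] by auto
  then have "(V1 (s * x))\<^sup>2 \<le> M" "(V2 (s * x))\<^sup>2 \<le> M" "V1 (s * x) * V2 (s * x) \<le> M"
    unfolding M_def by (auto intro: power_mono simp: power2_eq_square mult_mono)
  moreover have "sqrt Lam \<ge> 0" "M \<ge> 0" unfolding M_def using Lam_pos by auto
  ultimately have "coefP x \<le> sqrt Lam * M" "coefR x \<le> sqrt Lam * M" "coefK x \<le> 2 * sqrt Lam * M"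
    "sqrt Lam * M \<le> cbound" "cbound = 2 * sqrt Lam * M"
    unfolding coefP_def coefR_def coefK_def cbound_def M_def by (auto simp: mult.assoc mult_left_mono)
  moreover have "(coefK x)\<^sup>2 = 4 * coefP x * coefR x"
    unfolding coefK_def coefP_def coefR_def using Lam_pos by (simp add: power2_eq_square algebra_simps)
  moreover have "0 \<le> coefP x" "0 \<le> coefR x" "0 \<le> coefK x"
    unfolding coefP_def coefR_def coefK_def using V Lam_pos by auto
  ultimately show ?thesis by linarith
qed

lemma right_half_bounds:
  assumes "x \<in> {0..L}"
  shows "coerc \<le> coefR x \<and> coefP x \<le> coerc \<and> deriv V1 0 \<le> slope1 x \<and> slope1 x \<le> 1"
proof -
  have sx: "0 \<le> s * x" using assms s_pos by simp
  have "V1 0 \<le> V1 (s * x)" "V2 (s * x) \<le> V1 0"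
    using V1_mono[OF sx] V2_antimono[OF sx] V_symm[of 0] by auto
  then have "(V1 0)\<^sup>2 \<le> (V1 (s * x))\<^sup>2" "(V2 (s * x))\<^sup>2 \<le> (V1 0)\<^sup>2"
    using less_imp_le[OF V_pos(1)] less_imp_le[OF V_pos(2)] by (auto intro: power_mono)
  then show ?thesis
    unfolding coerc_def coefR_def coefP_def slope1_def using V1'_mono[OF sx] V1'_le_one Lam_pos
    by (auto intro: mult_left_mono)
qed

lemma left_half_bounds:
  assumes "x \<in> {-L..0}"
  shows "coerc \<le> coefP x \<and> coefR x \<le> coerc \<and> deriv V1 0 \<le> slope2 x \<and> slope2 x \<le> 1"
proof -
  have sx: "s * x \<le> 0" using assms s_pos by (simp add: mult_nonneg_nonpos)
  have "V1 0 \<le> V2 (s * x)" "V1 (s * x) \<le> V1 0"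
    using V1_mono[OF sx] V2_antimono[OF sx] V_symm[of 0] by auto
  then have "(V1 0)\<^sup>2 \<le> (V2 (s * x))\<^sup>2" "(V1 (s * x))\<^sup>2 \<le> (V1 0)\<^sup>2"
    using less_imp_le[OF V_pos(1)] less_imp_le[OF V_pos(2)] by (auto intro: power_mono)
  then show ?thesis
    unfolding coerc_def coefR_def coefP_def slope2_def V2'_eq
    using V1'_mono[of 0 "- (s * x)"] sx V1'_le_one Lam_pos by (auto intro: mult_left_mono)
qed

sublocale gs: ground_state_system L coefP coefK coefR slope1 slope2 slope1' slope2'
  "deriv V1 0" 1 coerc coerc cbound
proof
  show "continuous_on {-L..L} coefP" "continuous_on {-L..L} coefK" "continuous_on {-L..L} coefR"
    unfolding coefP_def coefK_def coefR_def
    using DERIV_isCont[OF scaled_V_deriv(1)] DERIV_isCont[OF scaled_V_deriv(2)]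
    by (auto intro!: continuous_intros continuous_at_imp_continuous_on)
  show "\<And>x. x \<in> {-L..L} \<Longrightarrow> 0 < slope1 x \<and> 0 < slope2 x"
    unfolding slope1_def slope2_def V2'_eq using V1'_pos by simp
  show "coerc > 0" unfolding coerc_def using V_pos(1)[of 0] Lam_pos by simp
  then show "coerc \<ge> 0" by simp
qed (use L_pos slope_derivs coef_bounds right_half_bounds left_half_bounds V1'_pos in auto)

lemma bvp_sol_iff: "bvp_sol V1 V2 Lam h1 h2 p1 p2 \<longleftrightarrow>
   (continuous_on {-L..L} p1 \<and> continuous_on {-L..L} p2 \<and>
    (\<forall>z\<in>{-L<..<L}. p1 differentiable at z \<and> deriv p1 differentiable at z \<and>
                    p2 differentiable at z \<and> deriv p2 differentiable at z) \<and>
    (\<forall>z\<in>{-L<..<L}. deriv (deriv p1) z = coefP z * p1 z + coefK z * p2 z - h1 z \<and>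
                    deriv (deriv p2) z = coefR z * p2 z + coefK z * p1 z - h2 z) \<and>
    p1 (-L) = 0 \<and> p1 L = 0 \<and> p2 (-L) = 0 \<and> p2 L = 0)"
  unfolding bvp_sol_def Let_def L_def[symmetric] s_def[symmetric] coefP_def coefR_def coefK_def
  by (auto simp: algebra_simps)

text \<open>With \<open>u\<^sub>2 = -p\<^sub>2\<close> the problem becomes one for \<open>odesys_sol\<close>: the sign change turns the
  coupling \<open>+K\<close> into \<open>-K\<close>.\<close>

lemma bvp_sol_imp_odesys_sol:
  assumes "bvp_sol V1 V2 Lam h1 h2 p1 p2"
  shows "odesys_sol (-L) L coefP coefK coefR h1 (\<lambda>z. - h2 z) p1 (\<lambda>z. - p2 z) (deriv p1) (\<lambda>z. - deriv p2 z)"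
  unfolding odesys_sol_def
proof (intro conjI ballI)
  note B = assms[unfolded bvp_sol_iff]
  show "continuous_on {-L..L} p1" "continuous_on {-L..L} (\<lambda>z. - p2 z)"
    using B by (auto intro: continuous_intros)
  fix z assume z: "z \<in> {-L<..<L}"
  have D: "(p1 has_real_derivative deriv p1 z) (at z)" "(deriv p1 has_real_derivative deriv (deriv p1) z) (at z)"
    "(p2 has_real_derivative deriv p2 z) (at z)" "(deriv p2 has_real_derivative deriv (deriv p2) z) (at z)"
  proof -
    have "p1 differentiable at z \<and> deriv p1 differentiable at z \<and>
        p2 differentiable at z \<and> deriv p2 differentiable at z" using B z by blast
    then show "(p1 has_real_derivative deriv p1 z) (at z)" "(deriv p1 has_real_derivative deriv (deriv p1) z) (at z)"
      "(p2 has_real_derivative deriv p2 z) (at z)" "(deriv p2 has_real_derivative deriv (deriv p2) z) (at z)"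
      by (simp_all add: DERIV_deriv_iff_real_differentiable)
  qed
  show "(p1 has_real_derivative deriv p1 z) (at z)" by (rule D(1))
  show "((\<lambda>z. - p2 z) has_real_derivative - deriv p2 z) (at z)" using DERIV_minus[OF D(3)] .
  show "(deriv p1 has_real_derivative coefP z * p1 z - coefK z * - p2 z - h1 z) (at z)"
    using D(2) B z by simp
  have "deriv (deriv p2) z = coefR z * p2 z + coefK z * p1 z - h2 z" using B z by blast
  then have "((\<lambda>z. - deriv p2 z) has_real_derivative - (coefR z * p2 z + coefK z * p1 z - h2 z)) (at z)"
    using DERIV_minus[OF D(4)] by simp
  then show "((\<lambda>z. - deriv p2 z) has_real_derivative coefR z * - p2 z - coefK z * p1 z - - h2 z) (at z)"
    by (simp add: algebra_simps)
qed

lemma deriv2_eq_at: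
  fixes f f' :: "real \<Rightarrow> real"
  assumes "open S" "z \<in> S" "\<forall>y\<in>S. (f has_real_derivative f' y) (at y)"
    and "(f' has_real_derivative D) (at z)"
  shows "f differentiable at z \<and> deriv f differentiable at z \<and> deriv (deriv f) z = D"
proof -
  have "\<forall>y\<in>S. deriv f y = f' y" using assms(3) DERIV_imp_deriv by blast
  then have "(deriv f has_real_derivative D) (at z)"
    using has_field_derivative_transform_within_open[OF assms(4) assms(1,2)] by auto
  then show ?thesis using assms(2,3) DERIV_imp_deriv real_differentiable_def by blast
qed

lemma bvp_solvable:
  assumes "continuous_on {-L..L} h1" "continuous_on {-L..L} h2"
  shows "\<exists>p1 p2. bvp_sol V1 V2 Lam h1 h2 p1 p2"
proof -
  obtain u1 u2 v1 v2 where U: "odesys_sol (-L) L coefP coefK coefR h1 (\<lambda>z. - h2 z) u1 u2 v1 v2"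
    "u1 (-L) = 0" "u1 L = 0" "u2 (-L) = 0" "u2 L = 0"
    using gs.bvp_solvable[of h1 "\<lambda>z. - h2 z"] assms by (auto intro: continuous_intros)
  have D: "(u1 has_real_derivative v1 y) (at y)" "((\<lambda>z. - u2 z) has_real_derivative - v2 y) (at y)"
    "(v1 has_real_derivative (coefP y * u1 y - coefK y * u2 y - h1 y)) (at y)"
    "((\<lambda>z. - v2 z) has_real_derivative - (coefR y * u2 y - coefK y * u1 y - - h2 y)) (at y)"
    if "y \<in> {-L<..<L}" for y
    using U(1) that unfolding odesys_sol_def by (blast intro: DERIV_minus)+
  have "u1 differentiable at z \<and> deriv u1 differentiable at z \<and>
      deriv (deriv u1) z = coefP z * u1 z - coefK z * u2 z - h1 z"
    "(\<lambda>z. - u2 z) differentiable at z \<and> deriv (\<lambda>z. - u2 z) differentiable at z \<and>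
      deriv (deriv (\<lambda>z. - u2 z)) z = - (coefR z * u2 z - coefK z * u1 z - - h2 z)"
    if "z \<in> {-L<..<L}" for z
    using deriv2_eq_at[OF open_greaterThanLessThan that _ D(3)[OF that]] D(1)
      deriv2_eq_at[OF open_greaterThanLessThan that _ D(4)[OF that]] D(2)
    by blast+
  moreover have "continuous_on {-L..L} u1" "continuous_on {-L..L} (\<lambda>z. - u2 z)"
    using U(1) unfolding odesys_sol_def by (auto intro: continuous_intros)
  ultimately have "bvp_sol V1 V2 Lam h1 h2 u1 (\<lambda>z. - u2 z)"
    unfolding bvp_sol_iff using U(2-5) by (auto simp: algebra_simps)
  then show ?thesis by blast
qed

lemma bvp_sol_unique:
  assumes "bvp_sol V1 V2 Lam h1 h2 p1 p2" "bvp_sol V1 V2 Lam h1 h2 q1 q2" "z \<in> {-L..L}"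
  shows "p1 z = q1 z \<and> p2 z = q2 z"
proof -
  have "odesys_sol (-L) L coefP coefK coefR (\<lambda>x. 0) (\<lambda>x. 0)
       (\<lambda>x. p1 x - q1 x) (\<lambda>x. q2 x - p2 x) (\<lambda>x. deriv p1 x - deriv q1 x) (\<lambda>x. deriv q2 x - deriv p2 x)"
    using odesys_sol_lincomb[OF bvp_sol_imp_odesys_sol[OF assms(1)] bvp_sol_imp_odesys_sol[OF assms(2)], of 1 "-1"]
    by simp
  then have "p1 z - q1 z = 0 \<and> q2 z - p2 z = 0"
    by (rule gs.homogeneous_solution_zero[OF _ _ _ _ _ assms(3)])
      (use assms(1,2) in \<open>auto simp: bvp_sol_iff\<close>)
  then show ?thesis by simp
qed

end

context scaled_V_pair
begin

definition "Cmass = mass_coeff (V1 0) (deriv V1 0) T"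
definition "Csup = sup_coeff (V1 0) (deriv V1 0) T"
definition "Cderiv2 = deriv2_coeff (V1 0) (deriv V1 0) T"

lemma Cmass_nonneg: "Cmass \<ge> 0"
  unfolding Cmass_def mass_coeff_def by simp

lemma Csup_ge_1: "Csup \<ge> 1"
  unfolding Csup_def sup_coeff_def using T_ge_2 Cmass_nonneg[unfolded Cmass_def] by simp

lemma coerc_eq: "coerc = s * s * (V1 0)\<^sup>2" unfolding coerc_def s_square ..

lemma cbound_eq: "cbound = 2 * (s * s) * (V1 0 + T)\<^sup>2" unfolding cbound_def s_square ..

lemma mass_const_eq: "gs.mass_const = Cmass / (s * s)"
  unfolding gs.mass_const_def gs.hardy_const_def
  unfolding Cmass_def mass_coeff_def coerc_eq L_eq
  using s_pos V1'_pos[of 0] V_pos(1)[of 0] by (simp add: field_simps power2_eq_square)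

lemma energy_bound_eq:
  "s * (gs.mass_const * (4 * gs.mass_const * L * F\<^sup>2))
     + (4 * gs.mass_const * L * F\<^sup>2 + cbound * (gs.mass_const * (4 * gs.mass_const * L * F\<^sup>2))) / s
   = (Csup - 1) * F\<^sup>2 / (s * s * s * s)"
  unfolding mass_const_eq
  unfolding cbound_eq L_eq Csup_def sup_coeff_def Cmass_def[symmetric]
  using s_pos by (simp add: field_simps power2_eq_square)

end

locale scaled_bvp_solution = scaled_V_pair +
  fixes h1 h2 p1 p2 :: "real \<Rightarrow> real" and F :: real
  assumes cont_h: "continuous_on {-halfwidth Lam..halfwidth Lam} h1"
      "continuous_on {-halfwidth Lam..halfwidth Lam} h2"
    and sol: "bvp_sol V1 V2 Lam h1 h2 p1 p2"
    and h_bound: "\<And>z. z \<in> {-halfwidth Lam<..<halfwidth Lam} \<Longrightarrow> \<bar>h1 z\<bar> \<le> F \<and> \<bar>h2 z\<bar> \<le> F"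
begin

sublocale gss: ground_state_solution L coefP coefK coefR slope1 slope2 slope1' slope2'
    "deriv V1 0" 1 coerc coerc cbound h1 "\<lambda>z. - h2 z" p1 "\<lambda>z. - p2 z" "deriv p1" "\<lambda>z. - deriv p2 z" F
  using bvp_sol_imp_odesys_sol[OF sol] sol cont_h h_bound unfolding L_def[symmetric]
  by unfold_locales (auto simp: bvp_sol_iff intro: continuous_intros)

lemma F_nonneg: "F \<ge> 0"
  using h_bound[of 0] L_pos unfolding L_def by auto

lemma sup_bound:
  assumes "z \<in> {-L..L}"
  shows "\<bar>p1 z\<bar> \<le> Csup * F / (s * s) \<and> \<bar>p2 z\<bar> \<le> Csup * F / (s * s)"
proof -
  have sq: "(p1 z)\<^sup>2 \<le> (Csup - 1) * F\<^sup>2 / (s * s * s * s) \<and> (p2 z)\<^sup>2 \<le> (Csup - 1) * F\<^sup>2 / (s * s * s * s)"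
    using gss.energy_estimate[OF s_pos assms] unfolding energy_bound_eq by simp
  have "Csup * 1 \<le> Csup * Csup" using Csup_ge_1 by (intro mult_left_mono) auto
  then have "Csup - 1 \<le> Csup\<^sup>2" by (simp add: power2_eq_square)
  then have "(Csup - 1) * F\<^sup>2 / (s * s * s * s) \<le> Csup\<^sup>2 * F\<^sup>2 / (s * s * s * s)"
    using s_pos by (intro divide_right_mono mult_right_mono) auto
  also have "\<dots> = (Csup * F / (s * s))\<^sup>2" by (simp add: power2_eq_square mult_ac)
  finally have "(Csup - 1) * F\<^sup>2 / (s * s * s * s) \<le> (Csup * F / (s * s))\<^sup>2" .
  moreover have "Csup * F / (s * s) \<ge> 0" using Csup_ge_1 F_nonneg s_pos by simp
  ultimately show ?thesis using sq by (meson order_trans power2_le_iff_abs_le)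
qed

lemma deriv2_bound:
  assumes z: "z \<in> {-L<..<L}"
  shows "\<bar>deriv (deriv p1) z\<bar> \<le> Cderiv2 * F \<and> \<bar>deriv (deriv p2) z\<bar> \<le> Cderiv2 * F"
proof -
  have zz: "z \<in> {-L..L}" using z by auto
  have c: "0 \<le> coefP z" "0 \<le> coefR z" "0 \<le> coefK z" "coefP z \<le> cbound" "coefR z \<le> cbound" "coefK z \<le> cbound"
    using coef_bounds[OF zz] by auto
  have prod: "\<bar>c * p\<bar> \<le> cbound * (Csup * F / (s * s))"
    if "0 \<le> c" "c \<le> cbound" "\<bar>p\<bar> \<le> Csup * F / (s * s)" for c p
    unfolding abs_mult using that by (intro mult_mono) auto
  have "cbound * (Csup * F / (s * s)) = 2 * (V1 0 + T)\<^sup>2 * Csup * F"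
    unfolding cbound_eq using s_pos by (simp add: field_simps)
  then have sum: "2 * (cbound * (Csup * F / (s * s))) + F = Cderiv2 * F"
    unfolding Cderiv2_def deriv2_coeff_def Csup_def[symmetric] by (simp add: algebra_simps)
  have "deriv (deriv p1) z = coefP z * p1 z + coefK z * p2 z - h1 z"
    "deriv (deriv p2) z = coefR z * p2 z + coefK z * p1 z - h2 z"
    using sol z unfolding bvp_sol_iff by auto
  then show ?thesis
    using prod[OF c(1,4)] prod[OF c(3,6)] prod[OF c(2,5)] sup_bound[OF zz] h_bound[of z] z sum
    unfolding L_def by (smt (verit))
qed

lemma deriv_bound:
  assumes z: "z \<in> {-L<..<L}"
  shows "\<bar>deriv p1 z\<bar> \<le> (2 * Csup + Cderiv2) * F / s \<and> \<bar>deriv p2 z\<bar> \<le> (2 * Csup + Cderiv2) * F / s"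
proof -
  have h: "1 / s > 0" "L - - L > 2 * (1 / s)" using s_pos T_ge_2 L_eq by (auto simp: field_simps)
  have D: "\<forall>t\<in>{-L<..<L}. (p1 has_real_derivative deriv p1 t) (at t) \<and> (deriv p1 has_real_derivative deriv (deriv p1) t) (at t)
     \<and> (p2 has_real_derivative deriv p2 t) (at t) \<and> (deriv p2 has_real_derivative deriv (deriv p2) t) (at t)"
  proof -
    have "\<forall>t\<in>{-L<..<L}. p1 differentiable at t \<and> deriv p1 differentiable at t \<and>
        p2 differentiable at t \<and> deriv p2 differentiable at t"
      using sol unfolding bvp_sol_iff by blast
    then show ?thesis by (simp add: DERIV_deriv_iff_real_differentiable)
  qed
  have "\<bar>deriv p1 z\<bar> \<le> 2 * (Csup * F / (s * s)) / (1 / s) + 1 / s * (Cderiv2 * F)"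
    "\<bar>deriv p2 z\<bar> \<le> 2 * (Csup * F / (s * s)) / (1 / s) + 1 / s * (Cderiv2 * F)"
  proof -
    have "\<forall>t\<in>{-L<..<L}. \<bar>p1 t\<bar> \<le> Csup * F / (s * s)" "\<forall>t\<in>{-L<..<L}. \<bar>p2 t\<bar> \<le> Csup * F / (s * s)"
      "\<forall>t\<in>{-L<..<L}. \<bar>deriv (deriv p1) t\<bar> \<le> Cderiv2 * F"
      "\<forall>t\<in>{-L<..<L}. \<bar>deriv (deriv p2) t\<bar> \<le> Cderiv2 * F"
      using sup_bound deriv2_bound by auto
    then show "\<bar>deriv p1 z\<bar> \<le> 2 * (Csup * F / (s * s)) / (1 / s) + 1 / s * (Cderiv2 * F)"
      "\<bar>deriv p2 z\<bar> \<le> 2 * (Csup * F / (s * s)) / (1 / s) + 1 / s * (Cderiv2 * F)"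
      using D deriv_bound_interpolation[OF _ _ _ _ h z] by blast+
  qed
  moreover have "2 * (Csup * F / (s * s)) / (1 / s) + 1 / s * (Cderiv2 * F) = (2 * Csup + Cderiv2) * F / s"
    using s_pos by (simp add: field_simps)
  ultimately show ?thesis by simp
qed

lemma weighted_sup_norm_le:
  defines "I \<equiv> {-halfwidth Lam<..<halfwidth Lam}"
  shows "ereal (Lam powr (-1/4)) * supn I (deriv p1) + supn I p1
       + ereal (Lam powr (-1/4)) * supn I (deriv p2) + supn I p2
     \<le> ereal (total_coeff (V1 0) (deriv V1 0) T * F / (s * s))"
proof -
  have I: "I = {-L<..<L}" unfolding I_def L_def ..
  have "supn I (deriv p1) \<le> ereal ((2 * Csup + Cderiv2) * F / s)"
    "supn I (deriv p2) \<le> ereal ((2 * Csup + Cderiv2) * F / s)"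
    "supn I p1 \<le> ereal (Csup * F / (s * s))" "supn I p2 \<le> ereal (Csup * F / (s * s))"
    unfolding I using deriv_bound sup_bound by (auto intro!: supn_le)
  moreover have "ereal (1 / s) \<ge> 0" using s_pos by simp
  ultimately have "ereal (1 / s) * supn I (deriv p1) + supn I p1 + ereal (1 / s) * supn I (deriv p2) + supn I p2
      \<le> ereal (1 / s) * ereal ((2 * Csup + Cderiv2) * F / s) + ereal (Csup * F / (s * s))
        + ereal (1 / s) * ereal ((2 * Csup + Cderiv2) * F / s) + ereal (Csup * F / (s * s))"
    by (intro add_mono ereal_mult_left_mono)
  also have "\<dots> = ereal (total_coeff (V1 0) (deriv V1 0) T * F / (s * s))"
    unfolding total_coeff_def Csup_def[symmetric] Cderiv2_def[symmetric] using s_pos by (simp add: field_simps)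
  finally show ?thesis unfolding Lam_powr_minus_quarter .
qed

end

lemma (in scaled_V_pair) bvp_sol_estimate:
  assumes cont_h: "continuous_on {-halfwidth Lam..halfwidth Lam} h1"
      "continuous_on {-halfwidth Lam..halfwidth Lam} h2"
    and sol: "bvp_sol V1 V2 Lam h1 h2 p1 p2"
    and small: "total_coeff (V1 0) (deriv V1 0) T \<le> Lam powr \<alpha>"
  defines "I \<equiv> {-halfwidth Lam<..<halfwidth Lam}"
  shows "ereal (Lam powr (-1/4)) * supn I (deriv p1) + supn I p1
       + ereal (Lam powr (-1/4)) * supn I (deriv p2) + supn I p2
     \<le> ereal (Lam powr (-1/2 + \<alpha>)) * (supn I h1 + supn I h2)"
proof -
  have I: "0 \<in> I" "I \<subseteq> {-halfwidth Lam..halfwidth Lam}" unfolding I_def using L_pos unfolding L_def by auto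
  obtain M1 where "\<And>z. z \<in> {-halfwidth Lam..halfwidth Lam} \<Longrightarrow> norm (h1 z) \<le> M1"
    using continuous_on_compact_bound[OF compact_Icc cont_h(1)] by blast
  moreover obtain M2 where "\<And>z. z \<in> {-halfwidth Lam..halfwidth Lam} \<Longrightarrow> norm (h2 z) \<le> M2"
    using continuous_on_compact_bound[OF compact_Icc cont_h(2)] by blast
  ultimately have M: "\<forall>z\<in>I. \<bar>h1 z\<bar> \<le> M1" "\<forall>z\<in>I. \<bar>h2 z\<bar> \<le> M2"
    using I(2) by auto
  obtain r1 r2 where r1: "supn I h1 = ereal r1" "r1 \<ge> 0" "\<forall>z\<in>I. \<bar>h1 z\<bar> \<le> r1"
    and r2: "supn I h2 = ereal r2" "r2 \<ge> 0" "\<forall>z\<in>I. \<bar>h2 z\<bar> \<le> r2"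
    using supn_finite[OF I(1) M(1)] supn_finite[OF I(1) M(2)] by blast
  interpret scaled_bvp_solution V1 V2 Lam h1 h2 p1 p2 "r1 + r2"
    using cont_h sol r1(2,3) r2(2,3) unfolding I_def by unfold_locales force+
  have "Lam powr (-1/2 + \<alpha>) = Lam powr \<alpha> * Lam powr (-1/2)"
    by (simp only: powr_add[symmetric] add.commute)
  also have "Lam powr (-1/2) = 1 / (s * s)"
    unfolding s_square using Lam_pos by (simp add: powr_minus_divide powr_half_sqrt)
  finally have "Lam powr (-1/2 + \<alpha>) = Lam powr \<alpha> / (s * s)" by simp
  moreover have "total_coeff (V1 0) (deriv V1 0) T * (r1 + r2) / (s * s) \<le> Lam powr \<alpha> * (r1 + r2) / (s * s)"
    using small r1(2) r2(2) s_pos by (intro divide_right_mono mult_right_mono) auto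
  ultimately have "ereal (total_coeff (V1 0) (deriv V1 0) T * (r1 + r2) / (s * s))
      \<le> ereal (Lam powr (-1/2 + \<alpha>)) * (ereal r1 + ereal r2)"
    by simp
  then show ?thesis
    using order_trans[OF weighted_sup_norm_le] unfolding I_def[symmetric] r1(1) r2(1) by blast
qed

theorem corollary4p1:
  fixes V1 V2 :: "real \<Rightarrow> real" and \<alpha> :: real
  assumes "is_V_pair V1 V2" and "\<alpha> > 0"
  shows "\<exists>Lam0 C. Lam0 > 0 \<and> C > 0 \<and>
    (\<forall>Lam \<ge> Lam0. \<forall>h1 h2.
       continuous_on {-halfwidth Lam..halfwidth Lam} h1 \<and>
       continuous_on {-halfwidth Lam..halfwidth Lam} h2 \<longrightarrow>
         (\<exists>p1 p2. bvp_sol V1 V2 Lam h1 h2 p1 p2) \<and>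
         (\<forall>p1 p2 q1 q2. bvp_sol V1 V2 Lam h1 h2 p1 p2 \<and> bvp_sol V1 V2 Lam h1 h2 q1 q2 \<longrightarrow>
            (\<forall>z\<in>{-halfwidth Lam..halfwidth Lam}. p1 z = q1 z \<and> p2 z = q2 z)) \<and>
         (\<forall>p1 p2. bvp_sol V1 V2 Lam h1 h2 p1 p2 \<longrightarrow>
            (let I = {-halfwidth Lam<..<halfwidth Lam} in
              ereal (Lam powr (-1/4)) * supn I (deriv p1) + supn I p1
              + ereal (Lam powr (-1/4)) * supn I (deriv p2) + supn I p2
              \<le> ereal (C * Lam powr (-1/2 + \<alpha>)) * (supn I h1 + supn I h2))))"
proof -
  interpret V_pair V1 V2 by unfold_locales (rule assms(1))
  obtain N where N: "\<And>x. x \<ge> N \<Longrightarrow> total_coeff (V1 0) (deriv V1 0) (ln x) / x powr \<alpha> < 1"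
    using order_tendstoD(2)[OF total_coeff_ln_small[OF V_pos(1)[of 0] V1'_pos[of 0] assms(2)], of 1]
    by (auto simp: eventually_at_top_linorder)
  show ?thesis
  proof (rule exI[of _ "max N (exp 2)"], rule exI[of _ "1::real"], intro conjI allI impI)
    show "max N (exp 2) > 0" by (simp add: less_max_iff_disj)
    fix Lam :: real and h1 h2 :: "real \<Rightarrow> real"
    assume Lam: "max N (exp 2) \<le> Lam"
      and h: "continuous_on {-halfwidth Lam..halfwidth Lam} h1 \<and> continuous_on {-halfwidth Lam..halfwidth Lam} h2"
    interpret scaled_V_pair V1 V2 Lam using Lam by unfold_locales auto
    have small: "total_coeff (V1 0) (deriv V1 0) T \<le> Lam powr \<alpha>"
      using N[of Lam] Lam Lam_pos unfolding T_def by (simp add: divide_less_eq)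
    show "\<exists>p1 p2. bvp_sol V1 V2 Lam h1 h2 p1 p2" using bvp_solvable h unfolding L_def by blast
    show "\<forall>z\<in>{-halfwidth Lam..halfwidth Lam}. p1 z = q1 z \<and> p2 z = q2 z"
      if "bvp_sol V1 V2 Lam h1 h2 p1 p2 \<and> bvp_sol V1 V2 Lam h1 h2 q1 q2" for p1 p2 q1 q2
      using bvp_sol_unique that unfolding L_def by blast
    show "let I = {-halfwidth Lam<..<halfwidth Lam} in
        ereal (Lam powr (-1/4)) * supn I (deriv p1) + supn I p1
        + ereal (Lam powr (-1/4)) * supn I (deriv p2) + supn I p2
        \<le> ereal (1 * Lam powr (-1/2 + \<alpha>)) * (supn I h1 + supn I h2)"
      if "bvp_sol V1 V2 Lam h1 h2 p1 p2" for p1 p2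
      using bvp_sol_estimate[OF _ _ that small] h by simp
  qed simp
qed

end
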